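(* Let $r$ be a positive integer, $p \equiv 3 \pmod 4$ a prime, $q=p^{4r}$, $g$ a primitive root of $\mathbb{F}_q$, $B=\{g^{4k}:1 \leq k \leq (q-1)/4\} \cup \{g^{4k+3}:1 \leq k \leq (q-1)/4\}$, and $I=\{x^{p^r}-x: x \in \mathbb{F}_q\}$. If $I \cap h^{-1} I \cap B \neq \emptyset$ for every $h \in \mathbb{F}_q \setminus \mathbb{F}_{p^r}$, then $\mathbb{F}_{p^r}$ is a maximal clique in the Peisert graph $P_q^*$ (constructed with $g$); otherwise, the clique number of $P_q^*$ is $\sqrt{q}$.
   Context: The Peisert graph $P_q^*$ (for $q=p^{2s}$, $p\equiv 3\pmod 4$, with primitive root $g$) has vertex set $\mathbb{F}_q$, two distinct vertices being adjacent iff their difference lies in $\{g^j: j \equiv 0,1 \pmod 4\}$. A maximal clique is a clique to which no further vertex can be added while remaining a clique. $h^{-1}I=\{h^{-1}x: x\in I\}$. *)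

theory Defs
  imports "HOL-Computational_Algebra.Primes"
begin

definition primitive_root :: "'a::field \<Rightarrow> bool" where
  "primitive_root g \<longleftrightarrow> g \<noteq> 0 \<and> (\<forall>x. x \<noteq> 0 \<longrightarrow> (\<exists>k::nat. x = g ^ k))"

definition peisert_adj :: "'a::field \<Rightarrow> 'a \<Rightarrow> 'a \<Rightarrow> bool" where
  "peisert_adj g x y \<longleftrightarrow> x \<noteq> y \<and>
     (\<exists>j::nat. (j mod 4 = 0 \<or> j mod 4 = 1) \<and> x - y = g ^ j)"

definition peisert_clique :: "'a::field \<Rightarrow> 'a set \<Rightarrow> bool" where
  "peisert_clique g S \<longleftrightarrow> (\<forall>x\<in>S. \<forall>y\<in>S. x \<noteq> y \<longrightarrow> peisert_adj g x y)"

definition peisert_maximal_clique :: "'a::field \<Rightarrow> 'a set \<Rightarrow> bool" where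
  "peisert_maximal_clique g S \<longleftrightarrow> peisert_clique g S \<and>
     (\<forall>v. v \<notin> S \<longrightarrow> \<not> peisert_clique g (insert v S))"

definition peisert_clique_number :: "'a::{field,finite} \<Rightarrow> nat" where
  "peisert_clique_number g = Max {card S | S. peisert_clique g S}"

end

(* The connection set S = {g^j. j mod 4 in {0, 1}} is a union of cosets of the group of
   fourth powers, which contains the nonzero elements of F = GF(p^r).  Hence F is a clique, and
   a vertex v extends F to a larger clique iff the whole plane F + vF, an additive subgroup of
   size sqrt q, is a clique.

   For an additive subgroup W of size sqrt q, counting the ordered edges inside W with the
   additive characters psi(x y) expresses their number through the eigenvalues
   sum_{s in S} psi(y s) for y in the annihilator of W.  As p = 3 mod 4, q = p^(4r) is in the
   semiprimitive case: the quartic Gauss sums of GF(q) equal -sqrt q.  They are computed by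
   grouping elements by norm and trace to GF(sqrt q), which reduces them to Jacobi and Gauss
   sums there, evaluated by the classical identities.  So the eigenvalue at -y is
   (sqrt q - 1)/2 or -(sqrt q + 1)/2, the latter exactly for y in B, and W is a clique iff
   its annihilator avoids B.  The annihilator of F + hF is I inter h^-1 I.

   Finally, for a clique C the set g^2 C is independent, so the sums c + d with c in C and
   d in g^2 C are distinct; thus |C|^2 <= q and a clique F + hF attains the clique number. *)

theory Submission
  imports Defs "HOL-Number_Theory.Number_Theory" "HOL-Computational_Algebra.Polynomial"
begin

lemma diff_one_dvd_power_diff_one:
  fixes a k :: nat
  assumes "1 \<le> a"
  shows "(a - 1) dvd (a ^ k - 1)"
proof -
  have "[a = 1] (mod (a - 1))" using assms by (simp add: cong_altdef_nat)
  hence "[a ^ k = 1] (mod (a - 1))" using cong_pow by fastforce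
  moreover have "1 \<le> a ^ k" using assms by simp
  ultimately show ?thesis by (simp add: cong_altdef_nat)
qed

lemma sum_lessThan_add:
  fixes a b :: nat
  shows "(\<Sum>i<a + b. f i) = (\<Sum>i<a. f i) + (\<Sum>i<b. f (a + i))"
  by (induction b) (simp_all add: add_ac)

lemma i_power_mod: "\<i> ^ k = \<i> ^ (k mod 4)"
proof -
  have "\<i> ^ k = \<i> ^ (4 * (k div 4) + k mod 4)" by simp
  also have "\<dots> = (\<i> ^ 4) ^ (k div 4) * \<i> ^ (k mod 4)" by (simp only: power_add power_mult)
  finally show ?thesis by simp
qed

lemma i_power_cong: "a mod 4 = b mod 4 \<Longrightarrow> \<i> ^ a = \<i> ^ b"
  by (metis i_power_mod)

lemma i_power_eq:
  "\<i> ^ k = (if k mod 4 = 0 then 1 else if k mod 4 = 1 then \<i> else if k mod 4 = 2 then -1 else - \<i>)"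
proof -
  have "\<i> ^ k = \<i> ^ (k mod 4)" by (rule i_power_mod)
  moreover have "k mod 4 = 0 \<or> k mod 4 = 1 \<or> k mod 4 = 2 \<or> k mod 4 = 3" by linarith
  moreover have "\<i> ^ 3 = - \<i>" by (simp add: power3_eq_cube)
  ultimately show ?thesis by auto
qed

lemma i_power_eq_one_iff: "\<i> ^ a = 1 \<longleftrightarrow> a mod 4 = 0"
proof -
  have "- \<i> \<noteq> 1" "\<i> \<noteq> 1" by (simp_all add: complex_eq_iff)
  thus ?thesis using i_power_eq[of a] by (auto split: if_splits)
qed

lemma mod_4_mult_mod:
  assumes "(4::nat) dvd n"
  shows "(j * (c mod n)) mod 4 = (j * c) mod 4"
proof -
  have "(j * (c mod n)) mod 4 = (j * (c mod n mod 4)) mod 4" by (rule mod_mult_right_eq[symmetric])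
  also have "\<dots> = (j * (c mod 4)) mod 4" using assms by (simp add: mod_mod_cancel)
  also have "\<dots> = (j * c) mod 4" by (rule mod_mult_right_eq)
  finally show ?thesis .
qed

text \<open>The sums \<open>c + d\<close> with \<open>c \<in> C\<close> and \<open>d \<in> D\<close> are pairwise distinct.\<close>

lemma card_mult_card_le_difference_sets:
  fixes C D S :: "'a::{ab_group_add,finite} set"
  assumes "\<And>c c'. c \<in> C \<Longrightarrow> c' \<in> C \<Longrightarrow> c \<noteq> c' \<Longrightarrow> c - c' \<in> S"
    and "\<And>d d'. d \<in> D \<Longrightarrow> d' \<in> D \<Longrightarrow> d - d' \<notin> S"
  shows "card C * card D \<le> card (UNIV :: 'a set)"
proof -
  have "inj_on (\<lambda>(c, d). c + d) (C \<times> D)"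
  proof (rule inj_onI, clarify)
    fix c d c' d' assume cd: "c \<in> C" "d \<in> D" "c' \<in> C" "d' \<in> D" and eq: "c + d = c' + d'"
    have "c - c' = d' - d" using eq by (simp add: algebra_simps)
    hence "c = c'" using assms cd by metis
    thus "c = c' \<and> d = d'" using eq by simp
  qed
  hence "card (C \<times> D) \<le> card (UNIV :: 'a set)" by (rule card_inj_on_le) auto
  thus ?thesis by (simp add: card_cartesian_product)
qed

lemma sum_lessThan_4: "(\<Sum>j<(4::nat). f j) = f 0 + f 1 + f 2 + (f 3 :: 'b::comm_monoid_add)"
  by (simp add: eval_nat_numeral add_ac)

definition additive_subgroup :: "'a::ab_group_add set \<Rightarrow> bool" where
  "additive_subgroup W \<longleftrightarrow> 0 \<in> W \<and> (\<forall>x\<in>W. \<forall>y\<in>W. x + y \<in> W) \<and> (\<forall>x\<in>W. - x \<in> W)"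

lemma additive_subgroup_diff:
  "additive_subgroup W \<Longrightarrow> x \<in> W \<Longrightarrow> y \<in> W \<Longrightarrow> x - y \<in> W"
  unfolding additive_subgroup_def by (metis diff_conv_add_uminus)

section \<open>Finite fields with a primitive root\<close>

locale primitive_root_field =
  fixes g :: "'a::{field,finite}"
  assumes primitive_root: "primitive_root g"
begin

definition N :: nat where "N = card (UNIV :: 'a set) - 1"

lemma generator_nonzero [simp]: "g \<noteq> 0"
  using primitive_root unfolding primitive_root_def by blast

lemma nonzero_is_generator_power: "x \<noteq> 0 \<Longrightarrow> \<exists>k. x = g ^ k"
  using primitive_root unfolding primitive_root_def by blast

lemma card_nonzero: "card (UNIV - {0::'a}) = N"
  unfolding N_def by (simp add: card_Diff_singleton)

lemma N_pos: "0 < N"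
proof -
  have "card {0, 1::'a} \<le> card (UNIV :: 'a set)" by (rule card_mono) auto
  thus ?thesis unfolding N_def by simp
qed

lemma card_eq_Suc_N: "card (UNIV :: 'a set) = Suc N"
  using N_pos unfolding N_def by simp

lemma power_N_eq_one:
  fixes x :: 'a
  assumes "x \<noteq> 0"
  shows "x ^ N = 1"
proof -
  have "(\<Prod>y\<in>UNIV - {0}. x * y) = (\<Prod>y\<in>UNIV - {0}. y)"
    by (rule prod.reindex_bij_witness[of _ "\<lambda>y. y / x" "\<lambda>y. x * y"]) (use assms in auto)
  moreover have "(\<Prod>y\<in>UNIV - {0}. x * y) = x ^ N * (\<Prod>y\<in>UNIV - {0}. y)"
    by (simp add: prod.distrib card_nonzero)
  moreover have "(\<Prod>y\<in>UNIV - {0::'a}. y) \<noteq> 0" by simp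
  ultimately show ?thesis by simp
qed

lemma power_card_eq_self: "(x::'a) ^ card (UNIV :: 'a set) = x"
  using power_N_eq_one[of x] by (cases "x = 0") (simp_all add: card_eq_Suc_N)

lemma generator_power_mod: "g ^ k = g ^ (k mod N)"
proof -
  have "g ^ k = g ^ (N * (k div N) + k mod N)" by simp
  also have "\<dots> = (g ^ N) ^ (k div N) * g ^ (k mod N)" by (simp only: power_add power_mult)
  finally show ?thesis using power_N_eq_one by simp
qed

lemma generator_powers_image: "(\<lambda>k. g ^ k) ` {..<N} = UNIV - {0}"
proof (intro equalityI subsetI)
  fix x :: 'a assume "x \<in> UNIV - {0}"
  then obtain k where "x = g ^ k" using nonzero_is_generator_power by blast
  hence "x = g ^ (k mod N)" by (subst (asm) generator_power_mod)
  thus "x \<in> (\<lambda>k. g ^ k) ` {..<N}" using N_pos by auto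
qed auto

lemma inj_on_generator_powers: "inj_on (\<lambda>k. g ^ k) {..<N}"
  by (rule eq_card_imp_inj_on) (simp_all add: generator_powers_image card_nonzero)

lemma generator_power_eq_iff: "g ^ a = g ^ b \<longleftrightarrow> a mod N = b mod N"
proof
  assume "g ^ a = g ^ b"
  hence "g ^ (a mod N) = g ^ (b mod N)" by (metis generator_power_mod)
  thus "a mod N = b mod N"
    using inj_on_generator_powers N_pos unfolding inj_on_def by simp
qed (metis generator_power_mod)

lemma generator_power_eq_one_iff: "g ^ a = 1 \<longleftrightarrow> N dvd a"
  using generator_power_eq_iff[of a 0] by (simp add: mod_eq_0_iff_dvd)

text \<open>The value \<open>dlog 0\<close> is unspecified.\<close>

definition dlog :: "'a \<Rightarrow> nat" where "dlog x = inv_into {..<N} (\<lambda>k. g ^ k) x"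

lemma
  assumes "x \<noteq> 0"
  shows dlog_less: "dlog x < N" and generator_power_dlog [simp]: "g ^ dlog x = x"
proof -
  have "x \<in> (\<lambda>k. g ^ k) ` {..<N}" using generator_powers_image assms by auto
  thus "dlog x < N" "g ^ dlog x = x"
    unfolding dlog_def by (metis inv_into_into lessThan_iff, metis f_inv_into_f)
qed

lemma dlog_generator_power [simp]: "dlog (g ^ k) = k mod N"
proof -
  have "g ^ dlog (g ^ k) = g ^ k" by simp
  hence "dlog (g ^ k) mod N = k mod N" by (simp only: generator_power_eq_iff)
  thus ?thesis using dlog_less[of "g ^ k"] by simp
qed

lemma dlog_mult:
  assumes "x \<noteq> 0" "y \<noteq> 0"
  shows "dlog (x * y) = (dlog x + dlog y) mod N"
proof -
  have "x * y = g ^ (dlog x + dlog y)" using assms by (simp add: power_add)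
  thus ?thesis by simp
qed

lemma dlog_power:
  assumes "x \<noteq> 0"
  shows "dlog (x ^ k) = (dlog x * k) mod N"
proof -
  have "x ^ k = g ^ (dlog x * k)" using assms by (simp add: power_mult)
  thus ?thesis by simp
qed

lemma power_eq_one_iff_dvd_dlog:
  assumes "x \<noteq> 0"
  shows "x ^ e = 1 \<longleftrightarrow> N dvd dlog x * e"
proof -
  have "x ^ e = g ^ (dlog x * e)" using assms by (simp add: power_mult)
  thus ?thesis by (simp add: generator_power_eq_one_iff)
qed

lemma fixed_by_power_iff_dvd_dlog:
  assumes "2 \<le> m" "(m - 1) dvd N" "x \<noteq> 0"
  shows "x ^ m = x \<longleftrightarrow> N div (m - 1) dvd dlog x"
proof -
  obtain c where c: "N = (m - 1) * c" using assms(2) by blast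
  have "m = Suc (m - 1)" using assms(1) by simp
  hence "x ^ m = x * x ^ (m - 1)" by (metis power_Suc)
  hence "x ^ m = x \<longleftrightarrow> x ^ (m - 1) = 1" using assms(3) by auto
  also have "\<dots> \<longleftrightarrow> (m - 1) * c dvd dlog x * (m - 1)"
    using power_eq_one_iff_dvd_dlog[OF assms(3)] c by simp
  also have "\<dots> \<longleftrightarrow> c dvd dlog x" using assms(1) by (simp add: mult.commute)
  finally show ?thesis using c assms(1) by simp
qed

lemma
  assumes "2 \<le> m" "(m - 1) dvd N"
  shows nonzero_fixed_by_power_eq:
      "{x::'a. x ^ m = x} - {0} = (\<lambda>i. g ^ (N div (m - 1) * i)) ` {..<m - 1}"
    and inj_on_fixed_by_power_param: "inj_on (\<lambda>i. g ^ (N div (m - 1) * i)) {..<m - 1}"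
proof -
  define c where "c = N div (m - 1)"
  have N_eq: "N = (m - 1) * c" using assms c_def by simp
  have c_pos: "0 < c" using N_eq N_pos by (cases c) auto
  have dlog_param: "dlog (g ^ (c * i)) = c * i" if "i < m - 1" for i
    using that N_eq c_pos by (simp add: mult.commute)
  show "inj_on (\<lambda>i. g ^ (N div (m - 1) * i)) {..<m - 1}"
    unfolding c_def[symmetric]
  proof (rule inj_onI)
    fix a b assume ab: "a \<in> {..<m - 1}" "b \<in> {..<m - 1}" "g ^ (c * a) = g ^ (c * b)"
    hence "c * a = c * b" using dlog_param by (metis lessThan_iff)
    thus "a = b" using c_pos by simp
  qed
  show "{x::'a. x ^ m = x} - {0} = (\<lambda>i. g ^ (N div (m - 1) * i)) ` {..<m - 1}"
    unfolding c_def[symmetric]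
  proof (intro equalityI subsetI)
    fix x :: 'a assume x: "x \<in> {x. x ^ m = x} - {0}"
    then obtain i where i: "dlog x = c * i"
      using fixed_by_power_iff_dvd_dlog[OF assms] c_def by auto
    have "i < m - 1" using dlog_less[of x] x i N_eq c_pos by (simp add: mult.commute)
    moreover have "x = g ^ (c * i)" using generator_power_dlog[of x] x i by simp
    ultimately show "x \<in> (\<lambda>i. g ^ (c * i)) ` {..<m - 1}" by blast
  next
    fix x assume "x \<in> (\<lambda>i. g ^ (c * i)) ` {..<m - 1}"
    then obtain i where "i < m - 1" "x = g ^ (c * i)" by auto
    thus "x \<in> {x. x ^ m = x} - {0}"
      using fixed_by_power_iff_dvd_dlog[OF assms, of x] dlog_param c_def by simp
  qed
qed

lemma card_fixed_by_power:
  assumes "2 \<le> m" "(m - 1) dvd N"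
  shows "card {x::'a. x ^ m = x} = m"
proof -
  have "card ({x::'a. x ^ m = x} - {0}) = m - 1"
    unfolding nonzero_fixed_by_power_eq[OF assms]
    using card_image[OF inj_on_fixed_by_power_param[OF assms]] by simp
  moreover have "(0::'a) \<in> {x. x ^ m = x}" using assms by simp
  ultimately show ?thesis using assms(1) by (simp add: card_Diff_singleton)
qed

end

section \<open>The field of order \<open>p ^ (4 * r)\<close>\<close>

locale peisert_field = primitive_root_field g for g :: "'a::{field,finite}" +
  fixes p r :: nat
  assumes r_pos: "0 < r" and prime_p: "prime p" and p_mod_4: "p mod 4 = 3"
    and card_field: "card (UNIV :: 'a set) = p ^ (4 * r)"
begin

definition sqrt_q :: nat where "sqrt_q = p ^ (2 * r)"

lemma p_ge_3: "3 \<le> p"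
  using p_mod_4 prime_ge_2_nat[OF prime_p] by (cases "p = 2") auto

lemma odd_p: "odd p"
  using p_mod_4 by presburger

lemma card_field_sqrt_q: "p ^ (4 * r) = sqrt_q * sqrt_q"
  unfolding sqrt_q_def by (simp flip: power_add)

lemma N_eq: "N = p ^ (4 * r) - 1"
  unfolding N_def card_field ..

lemma sqrt_q_mod_8: "sqrt_q mod 8 = 1"
proof -
  have "p mod 8 = 3 \<or> p mod 8 = 7" using p_mod_4 by presburger
  moreover have "(p * p) mod 8 = ((p mod 8) * (p mod 8)) mod 8" by (simp add: mod_mult_eq)
  ultimately have "p ^ 2 mod 8 = 1" by (auto simp: power2_eq_square)
  hence "((p ^ 2) mod 8) ^ r mod 8 = 1" by simp
  hence "(p ^ 2) ^ r mod 8 = 1" by (simp only: power_mod)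
  thus ?thesis unfolding sqrt_q_def by (simp add: power_mult)
qed

lemma sqrt_q_ge_9: "9 \<le> sqrt_q"
proof -
  have "p ^ 2 \<le> sqrt_q" unfolding sqrt_q_def using r_pos p_ge_3 by (intro power_increasing) auto
  moreover have "9 \<le> p ^ 2" using p_ge_3 power_mono[of 3 p 2] by simp
  ultimately show ?thesis by simp
qed

lemma odd_sqrt_q: "odd sqrt_q"
  using sqrt_q_mod_8 by presburger

lemma N_factor: "N = (sqrt_q - 1) * (sqrt_q + 1)"
  unfolding N_eq card_field_sqrt_q using sqrt_q_ge_9 by (simp add: algebra_simps)

lemma four_dvd_sqrt_q_minus_1: "4 dvd sqrt_q - 1"
  using sqrt_q_mod_8 sqrt_q_ge_9 by presburger

lemma four_dvd_N: "4 dvd N"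
  using four_dvd_sqrt_q_minus_1 by (simp add: N_factor)

lemma eight_dvd_N: "8 dvd N"
proof -
  have "8 dvd sqrt_q - 1" using sqrt_q_mod_8 sqrt_q_ge_9 by presburger
  thus ?thesis by (simp add: N_factor)
qed

lemma dlog_mod_4_mult:
  "x \<noteq> 0 \<Longrightarrow> y \<noteq> 0 \<Longrightarrow> dlog (x * y) mod 4 = (dlog x + dlog y) mod 4"
  using four_dvd_N by (simp add: dlog_mult mod_mod_cancel)

section \<open>Frobenius, subfields and traces\<close>

lemma CHAR_eq: "CHAR('a) = p"
proof -
  have "0 < CHAR('a)" by (rule finite_imp_CHAR_pos) simp
  hence prime_char: "prime CHAR('a)" using prime_CHAR_semidom by blast
  have "CHAR('a) dvd p ^ (4 * r)" using CHAR_dvd_CARD[where 'a='a] card_field by simp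
  hence "CHAR('a) dvd p" using prime_char prime_dvd_power by blast
  thus ?thesis using prime_char prime_p by (simp add: primes_dvd_imp_eq)
qed

lemma frobenius_add: "(x + y :: 'a) ^ (p ^ k) = x ^ (p ^ k) + y ^ (p ^ k)"
  by (rule freshmans_dream') (use CHAR_eq prime_p in auto)

lemma frobenius_sum: "(\<Sum>i\<in>A. f i :: 'a) ^ (p ^ k) = (\<Sum>i\<in>A. f i ^ (p ^ k))"
  by (rule freshmans_dream_sum') (use CHAR_eq prime_p in auto)

lemma frobenius_diff: "(x - y :: 'a) ^ (p ^ k) = x ^ (p ^ k) - y ^ (p ^ k)"
  using frobenius_add[of "x - y" y k] by simp

lemma frobenius_minus: "(- x :: 'a) ^ (p ^ k) = - (x ^ (p ^ k))"
  using frobenius_diff[of 0 x k] p_ge_3 by simp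

lemma of_nat_eq_of_nat_iff: "(of_nat a :: 'a) = of_nat b \<longleftrightarrow> a mod p = b mod p"
  using of_nat_eq_iff_cong_CHAR[where 'a='a] CHAR_eq by (simp add: cong_def)

text \<open>\<open>fixfield d\<close> is \<open>GF(p ^ d)\<close> when \<open>d\<close> divides \<open>4 * r\<close>; in particular
  \<open>L = GF(sqrt_q)\<close>.\<close>

definition fixfield :: "nat \<Rightarrow> 'a set" where "fixfield d = {x. x ^ (p ^ d) = x}"

abbreviation L :: "'a set" where "L \<equiv> fixfield (2 * r)"

lemma fixfield_add: "x \<in> fixfield d \<Longrightarrow> y \<in> fixfield d \<Longrightarrow> x + y \<in> fixfield d"
  unfolding fixfield_def by (simp add: frobenius_add)

lemma fixfield_diff: "x \<in> fixfield d \<Longrightarrow> y \<in> fixfield d \<Longrightarrow> x - y \<in> fixfield d"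
  unfolding fixfield_def by (simp add: frobenius_diff)

lemma fixfield_minus: "x \<in> fixfield d \<Longrightarrow> - x \<in> fixfield d"
  unfolding fixfield_def by (simp add: frobenius_minus)

lemma fixfield_mult: "x \<in> fixfield d \<Longrightarrow> y \<in> fixfield d \<Longrightarrow> x * y \<in> fixfield d"
  unfolding fixfield_def by (simp add: power_mult_distrib)

lemma fixfield_inverse: "x \<in> fixfield d \<Longrightarrow> inverse x \<in> fixfield d"
  unfolding fixfield_def by (simp add: power_inverse)

lemma fixfield_divide: "x \<in> fixfield d \<Longrightarrow> y \<in> fixfield d \<Longrightarrow> x / y \<in> fixfield d"
  by (simp add: divide_inverse fixfield_mult fixfield_inverse)

lemma fixfield_power:
  assumes "x \<in> fixfield d"
  shows "x ^ k \<in> fixfield d"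
proof -
  have "(x ^ k) ^ (p ^ d) = (x ^ (p ^ d)) ^ k" by (metis power_mult mult.commute)
  thus ?thesis using assms unfolding fixfield_def by simp
qed

lemma fixfield_zero [simp]: "0 \<in> fixfield d"
  unfolding fixfield_def using p_ge_3 by simp

lemma fixfield_one [simp]: "1 \<in> fixfield d"
  unfolding fixfield_def by simp

lemma fixfield_full [simp]: "fixfield (4 * r) = UNIV"
  unfolding fixfield_def using power_card_eq_self card_field by simp

lemma prime_field_subset: "fixfield 1 \<subseteq> fixfield d"
proof
  fix x assume x: "x \<in> fixfield 1"
  show "x \<in> fixfield d" unfolding fixfield_def
  proof (induction d)
    case (Suc d)
    have "x ^ (p ^ Suc d) = (x ^ (p ^ d)) ^ p" by (simp add: power_mult[symmetric] mult.commute)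
    thus ?case using Suc x unfolding fixfield_def by simp
  qed simp
qed

lemma of_nat_in_prime_field: "of_nat k \<in> fixfield 1"
proof (induction k)
  case (Suc k)
  thus ?case using fixfield_add[OF Suc fixfield_one] by (simp add: add.commute)
qed simp

lemma of_nat_in_fixfield: "of_nat k \<in> fixfield d"
  using of_nat_in_prime_field prime_field_subset by blast

lemma numeral_in_fixfield: "numeral k \<in> fixfield d"
  using of_nat_in_fixfield[of "numeral k"] by simp

lemma card_fixfield:
  assumes "d dvd 4 * r"
  shows "card (fixfield d) = p ^ d"
proof -
  obtain k where k: "4 * r = d * k" using assms by blast
  have d_pos: "0 < d" using k r_pos by (cases d) auto
  have "p \<le> p ^ d" using p_ge_3 d_pos by (simp add: self_le_power)
  hence "2 \<le> p ^ d" using p_ge_3 by linarith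
  moreover have "(p ^ d - 1) dvd N"
    unfolding N_eq k power_mult using p_ge_3 by (intro diff_one_dvd_power_diff_one) simp
  ultimately show ?thesis unfolding fixfield_def by (rule card_fixed_by_power)
qed

lemma prime_field_eq: "fixfield 1 = of_nat ` {..<p}"
proof -
  have "inj_on (of_nat :: nat \<Rightarrow> 'a) {..<p}"
    by (rule inj_onI) (simp add: of_nat_eq_of_nat_iff)
  hence "card (of_nat ` {..<p} :: 'a set) = p" by (simp add: card_image)
  moreover have "card (fixfield 1) = p" using card_fixfield[of 1] by simp
  ultimately show ?thesis
    using of_nat_in_prime_field by (intro card_subset_eq[symmetric]) auto
qed

definition nat_of_Fp :: "'a \<Rightarrow> nat" where "nat_of_Fp y = (THE k. k < p \<and> of_nat k = y)"

lemma
  assumes "y \<in> fixfield 1"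
  shows nat_of_Fp_less: "nat_of_Fp y < p" and of_nat_nat_of_Fp: "of_nat (nat_of_Fp y) = y"
proof -
  obtain k where k: "k < p" "of_nat k = y" using assms prime_field_eq by auto
  have "nat_of_Fp y = k" unfolding nat_of_Fp_def
    by (rule the_equality) (use k of_nat_eq_of_nat_iff in auto)
  thus "nat_of_Fp y < p" "of_nat (nat_of_Fp y) = y" using k by auto
qed

lemma nat_of_Fp_of_nat: "nat_of_Fp (of_nat k) = k mod p"
proof -
  have "(of_nat (nat_of_Fp (of_nat k)) :: 'a) = of_nat k"
    by (rule of_nat_nat_of_Fp[OF of_nat_in_prime_field])
  hence "nat_of_Fp (of_nat k :: 'a) mod p = k mod p" by (simp only: of_nat_eq_of_nat_iff)
  thus ?thesis using nat_of_Fp_less[OF of_nat_in_prime_field, of k] by simp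
qed

lemma nat_of_Fp_add:
  assumes "a \<in> fixfield 1" "b \<in> fixfield 1"
  shows "nat_of_Fp (a + b) = (nat_of_Fp a + nat_of_Fp b) mod p"
proof -
  have "a + b = of_nat (nat_of_Fp a + nat_of_Fp b)" using assms by (simp add: of_nat_nat_of_Fp)
  thus ?thesis by (simp only: nat_of_Fp_of_nat)
qed

lemma nat_of_Fp_eq_0_iff:
  assumes "y \<in> fixfield 1"
  shows "nat_of_Fp y = 0 \<longleftrightarrow> y = 0"
proof
  assume "nat_of_Fp y = 0"
  thus "y = 0" using of_nat_nat_of_Fp[OF assms] by simp
next
  assume "y = 0"
  thus "nat_of_Fp y = 0" using nat_of_Fp_of_nat[of 0] by simp
qed

definition trace :: "nat \<Rightarrow> 'a \<Rightarrow> 'a" where "trace d x = (\<Sum>i<d. x ^ (p ^ i))"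

lemma trace_add: "trace d (x + y) = trace d x + trace d y"
  unfolding trace_def by (simp add: frobenius_add sum.distrib)

lemma trace_zero [simp]: "trace d 0 = 0"
  unfolding trace_def using p_ge_3 by (simp add: power_0_left)

lemma trace_frobenius:
  assumes "x \<in> fixfield d"
  shows "trace d (x ^ p) = trace d x"
proof -
  have shift: "(x ^ p) ^ (p ^ i) = x ^ (p ^ Suc i)" for i by (simp add: power_mult)
  have "x + trace d (x ^ p) = (\<Sum>i<Suc d. x ^ (p ^ i))"
    unfolding trace_def shift by (subst sum.lessThan_Suc_shift) simp
  also have "\<dots> = trace d x + x" using assms unfolding trace_def fixfield_def by simp
  finally show ?thesis by simp
qed

lemma trace_in_prime_field:
  assumes "x \<in> fixfield d"
  shows "trace d x \<in> fixfield 1"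
proof -
  have shift: "(x ^ (p ^ i)) ^ (p ^ 1) = (x ^ p) ^ (p ^ i)" for i
    by (metis power_mult mult.commute power_one_right)
  have "trace d x ^ (p ^ 1) = (\<Sum>i<d. (x ^ p) ^ (p ^ i))"
    unfolding trace_def frobenius_sum shift ..
  also have "\<dots> = trace d x" using trace_frobenius[OF assms] unfolding trace_def .
  finally show ?thesis unfolding fixfield_def by simp
qed

lemma trace_double: "trace (d + d) x = trace d (x + x ^ (p ^ d))"
proof -
  have "trace (d + d) x = trace d x + (\<Sum>i<d. x ^ (p ^ (d + i)))"
    unfolding trace_def by (rule sum_lessThan_add)
  also have "(\<Sum>i<d. x ^ (p ^ (d + i))) = trace d (x ^ (p ^ d))"
    unfolding trace_def by (simp add: power_add power_mult)
  finally show ?thesis by (simp add: trace_add)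
qed

lemma relative_trace_in_fixfield:
  assumes "x \<in> fixfield (d + d)"
  shows "x + x ^ (p ^ d) \<in> fixfield d"
proof -
  have "(x ^ (p ^ d)) ^ (p ^ d) = x"
    using assms unfolding fixfield_def by (simp flip: power_mult power_add)
  thus ?thesis unfolding fixfield_def by (simp add: frobenius_add)
qed

lemma card_trace_roots_le: "0 < d \<Longrightarrow> card {x. trace d x = 0} \<le> p ^ (d - 1)"
proof -
  assume d: "0 < d"
  define T :: "'a poly" where "T = (\<Sum>i<d. monom 1 (p ^ i))"
  have inj: "inj (\<lambda>i. p ^ i)" using p_ge_3 by (intro injI) (simp add: power_inject_exp)
  have coeff_T: "coeff T k = (if k \<in> (\<lambda>i. p ^ i) ` {..<d} then 1 else 0)" for k
  proof -
    have "coeff T k = (\<Sum>i<d. if p ^ i = k then 1 else 0)"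
      unfolding T_def by (simp add: coeff_sum coeff_monom)
    also have "\<dots> = (if k \<in> (\<lambda>i. p ^ i) ` {..<d} then 1 else 0)"
    proof (cases "k \<in> (\<lambda>i. p ^ i) ` {..<d}")
      case True
      then obtain i where i: "i < d" "k = p ^ i" by auto
      have "(\<Sum>j<d. if p ^ j = k then 1 else (0::'a)) = (\<Sum>j\<in>{i}. if p ^ j = k then 1 else 0)"
        by (rule sum.mono_neutral_right) (use i inj in \<open>auto simp: inj_def\<close>)
      thus ?thesis using True i by simp
    qed (intro trans[OF sum.neutral], auto)
    finally show ?thesis .
  qed
  have "T \<noteq> 0" using coeff_T[of "p ^ (d - 1)"] d by (metis coeff_0 diff_less image_eqI
    lessThan_iff zero_less_one zero_neq_one)
  moreover have "degree T \<le> p ^ (d - 1)"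
  proof (rule degree_le, intro allI impI)
    fix k assume k: "p ^ (d - 1) < k"
    have "p ^ i \<le> p ^ (d - 1)" if "i < d" for i
      using that p_ge_3 by (intro power_increasing) auto
    thus "coeff T k = 0" using k coeff_T by fastforce
  qed
  moreover have "poly T x = trace d x" for x
    unfolding T_def trace_def by (simp add: poly_sum poly_monom)
  ultimately show ?thesis using card_poly_roots_bound[of T] by simp
qed

lemma trace_nontrivial:
  assumes "d dvd 4 * r"
  shows "\<exists>a\<in>fixfield d. trace d a \<noteq> 0"
proof (rule ccontr)
  have d_pos: "0 < d" using assms r_pos by (cases d) auto
  assume "\<not> (\<exists>a\<in>fixfield d. trace d a \<noteq> 0)"
  hence "card (fixfield d) \<le> card {x. trace d x = 0}" by (intro card_mono) auto
  hence "p ^ d \<le> p ^ (d - 1)" using card_trace_roots_le[OF d_pos] card_fixfield[OF assms] by simp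
  moreover have "p ^ (d - 1) < p ^ d" using p_ge_3 d_pos by (intro power_strict_increasing) auto
  ultimately show False by simp
qed

section \<open>Additive characters\<close>

definition zeta :: complex where "zeta = cis (2 * pi / real p)"

lemma zeta_power_p: "zeta ^ p = 1"
  unfolding zeta_def DeMoivre using p_ge_3 by simp

lemma zeta_power_mod: "zeta ^ k = zeta ^ (k mod p)"
proof -
  have "zeta ^ k = zeta ^ (p * (k div p) + k mod p)" by simp
  also have "\<dots> = (zeta ^ p) ^ (k div p) * zeta ^ (k mod p)" by (simp only: power_add power_mult)
  finally show ?thesis using zeta_power_p by simp
qed

lemma zeta_power_ne_one:
  assumes "0 < k" "k < p"
  shows "zeta ^ k \<noteq> 1"
proof
  assume "zeta ^ k = 1"
  hence "cos (real k * (2 * pi / real p)) = 1"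
    unfolding zeta_def DeMoivre by (metis cis.sel(1) one_complex.sel(1))
  then obtain n :: int where "real k * (2 * pi / real p) = real_of_int n * 2 * pi"
    using cos_one_2pi_int by blast
  hence "real k = of_int n * real p" using p_ge_3 by (simp add: field_simps)
  hence "int k = n * int p" by (metis of_int_eq_iff of_int_mult of_int_of_nat_eq)
  thus False using assms by (metis dvd_triv_right int_dvd_int_iff nat_dvd_not_less)
qed

definition psi :: "nat \<Rightarrow> 'a \<Rightarrow> complex" where "psi d x = zeta ^ nat_of_Fp (trace d x)"

lemma psi_add:
  assumes "x \<in> fixfield d" "y \<in> fixfield d"
  shows "psi d (x + y) = psi d x * psi d y"
proof -
  have "nat_of_Fp (trace d (x + y)) = (nat_of_Fp (trace d x) + nat_of_Fp (trace d y)) mod p"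
    unfolding trace_add using assms by (intro nat_of_Fp_add trace_in_prime_field)
  thus ?thesis unfolding psi_def by (metis zeta_power_mod power_add)
qed

lemma psi_zero [simp]: "psi d 0 = 1"
  unfolding psi_def using nat_of_Fp_of_nat[of 0] by simp

lemma psi_frobenius: "x \<in> fixfield d \<Longrightarrow> psi d (x ^ p) = psi d x"
  unfolding psi_def by (simp add: trace_frobenius)

lemma psi_double: "psi (d + d) x = psi d (x + x ^ (p ^ d))"
  unfolding psi_def trace_double ..

lemma sum_psi:
  assumes "d dvd 4 * r"
  shows "(\<Sum>x\<in>fixfield d. psi d x) = 0"
proof -
  obtain a where a: "a \<in> fixfield d" "trace d a \<noteq> 0" using trace_nontrivial[OF assms] by blast
  have "nat_of_Fp (trace d a) \<noteq> 0" "nat_of_Fp (trace d a) < p"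
    using nat_of_Fp_less nat_of_Fp_eq_0_iff trace_in_prime_field a by auto
  hence ne_1: "psi d a \<noteq> 1" unfolding psi_def by (intro zeta_power_ne_one) auto
  have "(\<Sum>x\<in>fixfield d. psi d x) = (\<Sum>x\<in>fixfield d. psi d (a + x))"
    by (rule sum.reindex_bij_witness[of _ "\<lambda>x. a + x" "\<lambda>x. x - a"])
      (use a fixfield_add fixfield_diff in auto)
  also have "\<dots> = (\<Sum>x\<in>fixfield d. psi d a * psi d x)"
    by (rule sum.cong) (simp_all add: psi_add a)
  finally have "(\<Sum>x\<in>fixfield d. psi d x) = psi d a * (\<Sum>x\<in>fixfield d. psi d x)"
    by (metis sum_distrib_left)
  thus ?thesis using ne_1 by (metis mult_cancel_right1)
qed

lemma sum_psi_mult: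
  assumes "d dvd 4 * r" "z \<in> fixfield d"
  shows "(\<Sum>y\<in>fixfield d. psi d (y * z)) = (if z = 0 then of_nat (p ^ d) else 0)"
proof (cases "z = 0")
  case False
  have "(\<Sum>y\<in>fixfield d. psi d (y * z)) = (\<Sum>x\<in>fixfield d. psi d x)"
    by (rule sum.reindex_bij_witness[of _ "\<lambda>x. x / z" "\<lambda>y. y * z"])
      (use False assms fixfield_mult fixfield_divide in auto)
  thus ?thesis using sum_psi[OF assms(1)] False by simp
qed (simp add: card_fixfield[OF assms(1)])

definition psi_K :: "'a \<Rightarrow> complex" where "psi_K x = psi (4 * r) x"

lemma psi_K_add: "psi_K (x + y) = psi_K x * psi_K y"
  unfolding psi_K_def by (rule psi_add) simp_all

lemma psi_K_zero [simp]: "psi_K 0 = 1"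
  unfolding psi_K_def by simp

lemma psi_K_frobenius_power: "psi_K (x ^ (p ^ k)) = psi_K x"
proof (induction k)
  case (Suc k)
  have "x ^ (p ^ Suc k) = (x ^ (p ^ k)) ^ p" by (simp add: power_mult[symmetric] mult.commute)
  thus ?case using Suc psi_frobenius[of "x ^ (p ^ k)" "4 * r"] unfolding psi_K_def by simp
qed simp

lemma sum_psi_K: "(\<Sum>x\<in>UNIV. psi_K x) = 0"
  using sum_psi[of "4 * r"] unfolding psi_K_def by simp

lemma sum_psi_K_mult: "(\<Sum>y\<in>UNIV. psi_K (y * z)) = (if z = 0 then of_nat (p ^ (4 * r)) else 0)"
  using sum_psi_mult[of "4 * r" z] unfolding psi_K_def by simp

section \<open>Quartic characters\<close>

text \<open>\<open>L\<close> has multiplicative order \<open>ord_L\<close>, and \<open>x \<mapsto> x ^ norm_exp\<close> is the norm onto \<open>L\<close>.\<close>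

definition ord_L :: nat where "ord_L = sqrt_q - 1"

definition norm_exp :: nat where "norm_exp = sqrt_q + 1"

lemma N_eq_ord_L_norm_exp: "N = ord_L * norm_exp"
  unfolding ord_L_def norm_exp_def by (rule N_factor)

lemma norm_exp_nonzero [simp]: "norm_exp \<noteq> 0"
  unfolding norm_exp_def by simp

lemma four_dvd_ord_L: "4 dvd ord_L"
  unfolding ord_L_def by (rule four_dvd_sqrt_q_minus_1)

lemma mult_norm_exp_mod_N: "(norm_exp * a) mod N = norm_exp * (a mod ord_L)"
proof -
  have "norm_exp * (a mod ord_L) = (norm_exp * a) mod (norm_exp * ord_L)" by (rule mult_mod_right)
  thus ?thesis unfolding N_eq_ord_L_norm_exp by (simp only: mult.commute[of ord_L norm_exp])
qed

lemma L_iff_dvd_dlog: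
  assumes "x \<noteq> 0"
  shows "x \<in> L \<longleftrightarrow> norm_exp dvd dlog x"
proof -
  have "(sqrt_q - 1) dvd N" unfolding N_factor by (rule dvd_triv_left)
  hence "x ^ sqrt_q = x \<longleftrightarrow> N div (sqrt_q - 1) dvd dlog x"
    using fixed_by_power_iff_dvd_dlog[OF _ _ assms] sqrt_q_ge_9 by simp
  moreover have "N div (sqrt_q - 1) = norm_exp"
    unfolding N_eq_ord_L_norm_exp ord_L_def using sqrt_q_ge_9 by simp
  moreover have "x \<in> L \<longleftrightarrow> x ^ sqrt_q = x" unfolding fixfield_def sqrt_q_def by simp
  ultimately show ?thesis by simp
qed

text \<open>\<open>chi j\<close> is the \<open>j\<close>-th power of the quartic character of the whole field sending
  \<open>g\<close> to \<open>\<i>\<close>; \<open>chi_L j\<close> is its analogue on \<open>L\<close>, whose multiplicative group is generated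
  by \<open>g ^ norm_exp\<close>.\<close>

definition chi :: "nat \<Rightarrow> 'a \<Rightarrow> complex" where
  "chi j x = (if x = 0 then 0 else \<i> ^ (j * dlog x))"

definition dlog_L :: "'a \<Rightarrow> nat" where "dlog_L x = dlog x div norm_exp"

definition chi_L :: "nat \<Rightarrow> 'a \<Rightarrow> complex" where
  "chi_L j x = (if x = 0 then 0 else \<i> ^ (j * dlog_L x))"

lemma chi_zero [simp]: "chi j 0 = 0"
  unfolding chi_def by simp

lemma chi_L_zero [simp]: "chi_L j 0 = 0"
  unfolding chi_L_def by simp

lemma chi_eq: "x \<noteq> 0 \<Longrightarrow> chi j x = \<i> ^ (j * (dlog x mod 4))"
  unfolding chi_def by (auto intro: i_power_cong simp: mod_mult_right_eq)

lemma chi_mult: "chi j (x * y) = chi j x * chi j y"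
proof (cases "x = 0 \<or> y = 0")
  case False
  hence "(j * dlog (x * y)) mod 4 = (j * (dlog x + dlog y)) mod 4"
    by (simp add: dlog_mult mod_4_mult_mod[OF four_dvd_N])
  hence "\<i> ^ (j * dlog (x * y)) = \<i> ^ (j * (dlog x + dlog y))" by (rule i_power_cong)
  thus ?thesis unfolding chi_def using False by (simp add: distrib_left power_add)
qed (auto simp: chi_def)

lemma chi_mult_exp: "chi a x * chi b x = chi (a + b) x"
  unfolding chi_def by (simp add: distrib_right power_add)

lemma chi_cong:
  assumes "a mod 4 = b mod 4"
  shows "chi a x = chi b x"
proof -
  have "(a * dlog x) mod 4 = (b * dlog x) mod 4" using assms by (metis mod_mult_left_eq)
  hence "\<i> ^ (a * dlog x) = \<i> ^ (b * dlog x)" by (rule i_power_cong)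
  thus ?thesis unfolding chi_def by simp
qed

lemma chi_exp_trivial: "x \<noteq> 0 \<Longrightarrow> a mod 4 = 0 \<Longrightarrow> chi a x = 1"
  using chi_cong[of a 0 x] unfolding chi_def by simp

lemma chi_L_mult_exp: "chi_L a x * chi_L b x = chi_L (a + b) x"
  unfolding chi_L_def by (simp add: distrib_right power_add)

lemma chi_L_cong:
  assumes "a mod 4 = b mod 4"
  shows "chi_L a x = chi_L b x"
proof -
  have "(a * dlog_L x) mod 4 = (b * dlog_L x) mod 4" using assms by (metis mod_mult_left_eq)
  hence "\<i> ^ (a * dlog_L x) = \<i> ^ (b * dlog_L x)" by (rule i_power_cong)
  thus ?thesis unfolding chi_L_def by simp
qed

lemma chi_L_exp_trivial: "x \<noteq> 0 \<Longrightarrow> a mod 4 = 0 \<Longrightarrow> chi_L a x = 1"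
  using chi_L_cong[of a 0 x] unfolding chi_L_def by simp

lemma
  assumes "x \<in> L" "x \<noteq> 0"
  shows dlog_eq_dlog_L: "dlog x = norm_exp * dlog_L x"
    and dlog_L_less: "dlog_L x < ord_L"
proof -
  show *: "dlog x = norm_exp * dlog_L x"
    unfolding dlog_L_def using L_iff_dvd_dlog assms by simp
  have "norm_exp * dlog_L x < norm_exp * ord_L"
    using dlog_less[OF assms(2)] * N_eq_ord_L_norm_exp by (simp add: mult.commute)
  thus "dlog_L x < ord_L" by simp
qed

lemma dlog_L_eqI: "dlog x = norm_exp * k \<Longrightarrow> dlog_L x = k"
  unfolding dlog_L_def by simp

lemma dlog_L_generator_power: "i < ord_L \<Longrightarrow> dlog_L (g ^ (norm_exp * i)) = i"
  by (intro dlog_L_eqI) (simp add: mult_norm_exp_mod_N)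

lemma L_nonzero_eq: "L - {0} = (\<lambda>i. g ^ (norm_exp * i)) ` {..<ord_L}"
proof (intro equalityI subsetI)
  fix x assume x: "x \<in> L - {0}"
  hence "x = g ^ (norm_exp * dlog_L x)" using dlog_eq_dlog_L[of x] generator_power_dlog[of x]
    by simp
  thus "x \<in> (\<lambda>i. g ^ (norm_exp * i)) ` {..<ord_L}" using dlog_L_less[of x] x by auto
next
  fix x assume "x \<in> (\<lambda>i. g ^ (norm_exp * i)) ` {..<ord_L}"
  then obtain i where "i < ord_L" "x = g ^ (norm_exp * i)" by auto
  thus "x \<in> L - {0}" using L_iff_dvd_dlog[of x] by (simp add: mult_norm_exp_mod_N)
qed

lemma inj_on_L_param: "inj_on (\<lambda>i. g ^ (norm_exp * i)) {..<ord_L}"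
  by (rule inj_onI) (metis dlog_L_generator_power lessThan_iff)

lemma dlog_L_mult:
  assumes "x \<in> L" "y \<in> L" "x \<noteq> 0" "y \<noteq> 0"
  shows "dlog_L (x * y) = (dlog_L x + dlog_L y) mod ord_L"
proof -
  have "dlog (x * y) = (norm_exp * (dlog_L x + dlog_L y)) mod N"
    using dlog_mult[OF assms(3,4)] dlog_eq_dlog_L assms by (simp add: distrib_left)
  thus ?thesis unfolding mult_norm_exp_mod_N by (rule dlog_L_eqI)
qed

lemma chi_L_mult:
  assumes "x \<in> L" "y \<in> L"
  shows "chi_L j (x * y) = chi_L j x * chi_L j y"
proof (cases "x = 0 \<or> y = 0")
  case False
  hence "(j * dlog_L (x * y)) mod 4 = (j * (dlog_L x + dlog_L y)) mod 4"
    using assms by (simp add: dlog_L_mult mod_4_mult_mod[OF four_dvd_ord_L])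
  hence "\<i> ^ (j * dlog_L (x * y)) = \<i> ^ (j * (dlog_L x + dlog_L y))" by (rule i_power_cong)
  thus ?thesis unfolding chi_L_def using False by (simp add: distrib_left power_add)
qed (auto simp: chi_L_def)

lemma sum_chi_L:
  assumes "j mod 4 \<noteq> 0"
  shows "(\<Sum>y\<in>L. chi_L j y) = 0"
proof -
  have "(\<Sum>y\<in>L. chi_L j y) = (\<Sum>y\<in>L - {0}. chi_L j y)"
    by (simp add: sum.remove[of L 0])
  also have "\<dots> = (\<Sum>i<ord_L. chi_L j (g ^ (norm_exp * i)))"
    unfolding L_nonzero_eq by (rule sum.reindex[OF inj_on_L_param, unfolded comp_def])
  also have "\<dots> = (\<Sum>i<ord_L. (\<i> ^ j) ^ i)"
  proof (rule sum.cong)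
    fix i assume "i \<in> {..<ord_L}"
    hence "chi_L j (g ^ (norm_exp * i)) = \<i> ^ (j * i)"
      by (simp add: chi_L_def dlog_L_generator_power)
    thus "chi_L j (g ^ (norm_exp * i)) = (\<i> ^ j) ^ i" by (simp add: power_mult)
  qed simp
  also have "\<dots> = ((\<i> ^ j) ^ ord_L - 1) / (\<i> ^ j - 1)"
    using assms i_power_eq_one_iff by (intro geometric_sum) simp
  also have "(\<i> ^ j) ^ ord_L = 1"
    using four_dvd_ord_L by (simp add: i_power_eq_one_iff flip: power_mult)
  finally show ?thesis by simp
qed

text \<open>Every element of the prime field is a fourth power in \<open>L\<close>, because
  \<open>4 * (p - 1)\<close> divides \<open>ord_L\<close> when \<open>p mod 4 = 3\<close>.\<close>

lemma four_p_minus_1_dvd_ord_L: "4 * (p - 1) dvd ord_L"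
proof -
  have "4 dvd p + 1" using p_mod_4 by presburger
  then obtain c where c: "p + 1 = 4 * c" by blast
  have "(p - 1) * (p + 1) = p ^ 2 - 1" using p_ge_3
    by (cases p) (simp_all add: power2_eq_square algebra_simps)
  hence "4 * (p - 1) dvd p ^ 2 - 1" using c by (metis dvd_triv_left mult.assoc mult.commute)
  hence "[p ^ 2 = 1] (mod 4 * (p - 1))" using p_ge_3 by (simp add: cong_altdef_nat)
  hence "[(p ^ 2) ^ r = 1 ^ r] (mod 4 * (p - 1))" by (rule cong_pow)
  hence "[sqrt_q = 1] (mod 4 * (p - 1))" unfolding sqrt_q_def by (simp add: power_mult)
  thus ?thesis unfolding ord_L_def using sqrt_q_ge_9 by (simp add: cong_altdef_nat)
qed

lemma chi_L_prime_field:
  assumes "c \<in> fixfield 1" "c \<noteq> 0"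
  shows "chi_L j c = 1"
proof -
  obtain w where w: "ord_L = 4 * (p - 1) * w" using four_p_minus_1_dvd_ord_L by blast
  have N_eq': "N = (p - 1) * (norm_exp * (4 * w))"
    using w N_eq_ord_L_norm_exp by (simp add: ac_simps)
  have "N div (p - 1) dvd dlog c"
    using fixed_by_power_iff_dvd_dlog[of p c] assms p_ge_3 N_eq' unfolding fixfield_def by simp
  then obtain u where u: "dlog c = N div (p - 1) * u" by (elim dvdE)
  have "N div (p - 1) = norm_exp * (4 * w)" using N_eq' p_ge_3 by simp
  hence "dlog c = norm_exp * (4 * (w * u))" using u by (simp add: ac_simps)
  hence "dlog_L c = 4 * (w * u)" by (rule dlog_L_eqI)
  thus ?thesis unfolding chi_L_def using assms(2) by (simp add: i_power_eq_one_iff)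
qed

lemma chi_L_minus:
  assumes "x \<in> L"
  shows "chi_L j (- x) = chi_L j x"
proof -
  have m1: "- 1 \<in> fixfield 1" using fixfield_minus[OF fixfield_one] .
  have "chi_L j (- x) = chi_L j (- 1) * chi_L j x"
    using chi_L_mult[of "- 1" x j] assms prime_field_subset m1 by auto
  moreover have "chi_L j (- 1) = 1" using chi_L_prime_field m1 by simp
  ultimately show ?thesis by simp
qed

lemma chi_L_frobenius:
  assumes "y \<in> L"
  shows "chi_L j (y ^ p) = chi_L (3 * j) y"
proof (cases "y = 0")
  case False
  have "dlog (y ^ p) = (norm_exp * (dlog_L y * p)) mod N"
    using dlog_power[OF False] dlog_eq_dlog_L[OF assms False] by (simp add: ac_simps)
  hence "dlog_L (y ^ p) = (dlog_L y * p) mod ord_L"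
    unfolding mult_norm_exp_mod_N by (rule dlog_L_eqI)
  hence "(j * dlog_L (y ^ p)) mod 4 = (j * dlog_L y * p) mod 4"
    by (simp add: mod_4_mult_mod[OF four_dvd_ord_L] mult.assoc)
  also have "\<dots> = (j * dlog_L y * (p mod 4)) mod 4" by (rule mod_mult_right_eq[symmetric])
  also have "\<dots> = (3 * j * dlog_L y) mod 4" using p_mod_4 by (simp add: ac_simps)
  finally have "\<i> ^ (j * dlog_L (y ^ p)) = \<i> ^ (3 * j * dlog_L y)" by (rule i_power_cong)
  thus ?thesis unfolding chi_L_def using False by simp
qed (use p_ge_3 in \<open>simp add: chi_L_def power_0_left\<close>)

lemma
  assumes "x \<noteq> 0"
  shows norm_in_L: "x ^ norm_exp \<in> L"
    and chi_L_norm: "chi_L j (x ^ norm_exp) = chi j x"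
proof -
  have nz: "x ^ norm_exp \<noteq> 0" using assms by simp
  have "dlog (x ^ norm_exp) = (dlog x * norm_exp) mod N" by (rule dlog_power[OF assms])
  also have "\<dots> = norm_exp * (dlog x mod ord_L)"
    by (simp only: mult.commute[of _ norm_exp] mult_norm_exp_mod_N)
  finally have e: "dlog (x ^ norm_exp) = norm_exp * (dlog x mod ord_L)" .
  thus "x ^ norm_exp \<in> L" using L_iff_dvd_dlog[OF nz] by simp
  have "(j * dlog_L (x ^ norm_exp)) mod 4 = (j * dlog x) mod 4"
    using dlog_L_eqI[OF e] by (simp add: mod_4_mult_mod[OF four_dvd_ord_L])
  hence "\<i> ^ (j * dlog_L (x ^ norm_exp)) = \<i> ^ (j * dlog x)" by (rule i_power_cong)
  thus "chi_L j (x ^ norm_exp) = chi j x" unfolding chi_L_def chi_def using assms nz by simp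
qed

section \<open>Gauss and Jacobi sums over \<open>L\<close>\<close>

definition gauss_L :: "nat \<Rightarrow> complex" where
  "gauss_L j = (\<Sum>y\<in>L. chi_L j y * psi (2 * r) y)"

definition jacobi_L :: "nat \<Rightarrow> nat \<Rightarrow> complex" where
  "jacobi_L a b = (\<Sum>y\<in>L. chi_L a y * chi_L b (1 - y))"

lemma gauss_L_cong:
  assumes "a mod 4 = b mod 4"
  shows "gauss_L a = gauss_L b"
  unfolding gauss_L_def using chi_L_cong[OF assms] by simp

lemma gauss_L_frobenius: "gauss_L j = gauss_L (3 * j)"
proof -
  define e where "e = p ^ (2 * r - 1)"
  have pe: "p * e = p ^ (2 * r)" unfolding e_def using r_pos by (simp flip: power_Suc)
  have inv: "(y ^ p) ^ e = y" "(y ^ e) ^ p = y" if "y \<in> L" for y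
  proof -
    have "(y ^ p) ^ e = y ^ (p * e)" "(y ^ e) ^ p = y ^ (p * e)"
      by (simp_all only: power_mult[symmetric] mult.commute)
    thus "(y ^ p) ^ e = y" "(y ^ e) ^ p = y" using that pe unfolding fixfield_def by simp_all
  qed
  have "gauss_L j = (\<Sum>y\<in>L. chi_L j (y ^ p) * psi (2 * r) (y ^ p))"
    unfolding gauss_L_def
    by (rule sum.reindex_bij_witness[of _ "\<lambda>y. y ^ p" "\<lambda>y. y ^ e"])
      (simp_all add: inv fixfield_power)
  also have "\<dots> = gauss_L (3 * j)"
    unfolding gauss_L_def by (rule sum.cong[OF refl]) (simp add: chi_L_frobenius psi_frobenius)
  finally show ?thesis .
qed

lemma gauss_L_mult:
  "gauss_L a * gauss_L b = (\<Sum>x\<in>L. \<Sum>y\<in>L. chi_L a x * chi_L b y * psi (2 * r) (x + y))"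
  unfolding gauss_L_def sum_product
  by (intro sum.cong refl) (simp add: psi_add ac_simps)

lemma sum_psi_L_nonzero_mult:
  assumes "z \<in> L"
  shows "(\<Sum>y\<in>L - {0}. psi (2 * r) (y * z)) = (if z = 0 then of_nat sqrt_q else 0) - 1"
proof -
  have "(\<Sum>y\<in>L. psi (2 * r) (y * z)) = 1 + (\<Sum>y\<in>L - {0}. psi (2 * r) (y * z))"
    by (simp add: sum.remove[of L 0])
  moreover have "(\<Sum>y\<in>L. psi (2 * r) (y * z)) = (if z = 0 then of_nat sqrt_q else 0)"
    using sum_psi_mult[of "2 * r" z] assms unfolding sqrt_q_def by simp
  ultimately show ?thesis by (simp add: algebra_simps)
qed

text \<open>The classical evaluation \<open>G(\<chi>) G(\<chi>\<inverse>) = \<chi>(-1) |L|\<close>, with \<open>\<chi>(-1) = 1\<close>.\<close>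

lemma gauss_L_mult_inverse:
  assumes "(a + b) mod 4 = 0" "a mod 4 \<noteq> 0"
  shows "gauss_L a * gauss_L b = of_nat sqrt_q"
proof -
  have inner: "(\<Sum>x\<in>L. chi_L a x * chi_L b y * psi (2 * r) (x + y)) =
      (\<Sum>u\<in>L. chi_L a u * psi (2 * r) (y * (1 - u)))"
    if y: "y \<in> L" "y \<noteq> 0" for y
  proof (rule sum.reindex_bij_witness[of _ "\<lambda>x. - (x / y)" "\<lambda>u. - (u * y)", symmetric])
    fix u assume u: "u \<in> L"
    have "chi_L a (- (u * y)) * chi_L b y = chi_L a u * (chi_L a y * chi_L b y)"
      using chi_L_minus chi_L_mult u y fixfield_mult by (simp add: ac_simps)
    also have "chi_L a y * chi_L b y = 1"
      using chi_L_mult_exp chi_L_exp_trivial[OF y(2) assms(1)] by simp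
    finally show "chi_L a (- (u * y)) * chi_L b y * psi (2 * r) (- (u * y) + y) =
        chi_L a u * psi (2 * r) (y * (1 - u))" by (simp add: algebra_simps)
  qed (use y fixfield_mult fixfield_minus fixfield_divide in auto)
  have "gauss_L a * gauss_L b = (\<Sum>y\<in>L - {0}. \<Sum>x\<in>L. chi_L a x * chi_L b y * psi (2 * r) (x + y))"
    unfolding gauss_L_mult by (subst sum.swap) (simp add: sum.remove[of L 0])
  also have "\<dots> = (\<Sum>u\<in>L. chi_L a u * (\<Sum>y\<in>L - {0}. psi (2 * r) (y * (1 - u))))"
    by (simp add: inner sum_distrib_left) (rule sum.swap)
  also have "\<dots> = (\<Sum>u\<in>L. (if u = 1 then chi_L a u * of_nat sqrt_q else 0) - chi_L a u)"
  proof (rule sum.cong[OF refl])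
    fix u assume "u \<in> L"
    hence h: "(\<Sum>y\<in>L - {0}. psi (2 * r) (y * (1 - u))) = (if u = 1 then of_nat sqrt_q else 0) - 1"
      using sum_psi_L_nonzero_mult[of "1 - u"] fixfield_diff[OF fixfield_one] by simp
    show "chi_L a u * (\<Sum>y\<in>L - {0}. psi (2 * r) (y * (1 - u))) =
        (if u = 1 then chi_L a u * of_nat sqrt_q else 0) - chi_L a u"
      unfolding h by (simp add: algebra_simps)
  qed
  also have "\<dots> = chi_L a 1 * of_nat sqrt_q"
    by (simp add: sum_subtractf sum_chi_L[OF assms(2)] sum.delta)
  finally show ?thesis using chi_L_prime_field[of 1 a] by simp
qed

lemma sum_chi_L_convolution:
  assumes "(a + b) mod 4 \<noteq> 0" "s \<in> L"
  shows "(\<Sum>x\<in>L. chi_L a x * chi_L b (s - x)) = chi_L (a + b) s * jacobi_L a b"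
proof (cases "s = 0")
  case True
  have "(\<Sum>x\<in>L. chi_L a x * chi_L b (s - x)) = (\<Sum>x\<in>L. chi_L (a + b) x)"
    unfolding True by (rule sum.cong) (simp_all add: chi_L_minus chi_L_mult_exp)
  thus ?thesis using sum_chi_L[OF assms(1)] True by simp
next
  case False
  have "(\<Sum>x\<in>L. chi_L a x * chi_L b (s - x)) = (\<Sum>y\<in>L. chi_L a (s * y) * chi_L b (s - s * y))"
    by (rule sum.reindex_bij_witness[of _ "\<lambda>y. s * y" "\<lambda>x. x / s"])
      (use False assms(2) fixfield_mult fixfield_divide in auto)
  also have "\<dots> = (\<Sum>y\<in>L. (chi_L a s * chi_L b s) * (chi_L a y * chi_L b (1 - y)))"
  proof (rule sum.cong[OF refl])
    fix y assume y: "y \<in> L"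
    have "s - s * y = s * (1 - y)" by (simp add: algebra_simps)
    thus "chi_L a (s * y) * chi_L b (s - s * y) = (chi_L a s * chi_L b s) * (chi_L a y * chi_L b (1 - y))"
      using chi_L_mult assms(2) y fixfield_diff[OF fixfield_one y] by (simp add: ac_simps)
  qed
  finally show ?thesis unfolding jacobi_L_def by (simp add: sum_distrib_left chi_L_mult_exp)
qed

lemma gauss_L_mult_eq_jacobi:
  assumes "(a + b) mod 4 \<noteq> 0"
  shows "gauss_L a * gauss_L b = jacobi_L a b * gauss_L (a + b)"
proof -
  have "gauss_L a * gauss_L b = (\<Sum>x\<in>L. \<Sum>s\<in>L. chi_L a x * chi_L b (s - x) * psi (2 * r) s)"
    unfolding gauss_L_mult
  proof (rule sum.cong[OF refl])
    fix x assume x: "x \<in> L"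
    show "(\<Sum>y\<in>L. chi_L a x * chi_L b y * psi (2 * r) (x + y)) =
        (\<Sum>s\<in>L. chi_L a x * chi_L b (s - x) * psi (2 * r) s)"
      by (rule sum.reindex_bij_witness[of _ "\<lambda>s. s - x" "\<lambda>y. x + y"])
        (use x fixfield_add fixfield_diff in auto)
  qed
  also have "\<dots> = (\<Sum>s\<in>L. psi (2 * r) s * (\<Sum>x\<in>L. chi_L a x * chi_L b (s - x)))"
    by (subst sum.swap) (simp add: sum_distrib_left ac_simps)
  also have "\<dots> = (\<Sum>s\<in>L. jacobi_L a b * (chi_L (a + b) s * psi (2 * r) s))"
    by (rule sum.cong[OF refl]) (simp add: sum_chi_L_convolution[OF assms])
  also have "\<dots> = jacobi_L a b * gauss_L (a + b)"
    unfolding gauss_L_def by (simp add: sum_distrib_left)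
  finally show ?thesis .
qed

lemma gauss_L_odd_ne_zero:
  assumes "odd j"
  shows "gauss_L j \<noteq> 0"
proof -
  have "gauss_L j * gauss_L (3 * j) = of_nat sqrt_q"
    using assms by (intro gauss_L_mult_inverse) presburger+
  thus ?thesis using sqrt_q_ge_9 by auto
qed

lemma jacobi_L_odd_2:
  assumes "odd j"
  shows "jacobi_L j 2 = gauss_L 2"
proof -
  have "gauss_L j * gauss_L 2 = jacobi_L j 2 * gauss_L (j + 2)"
    using assms by (intro gauss_L_mult_eq_jacobi) presburger
  moreover have "(j + 2) mod 4 = (3 * j) mod 4" using assms by presburger
  hence "gauss_L (j + 2) = gauss_L j" using gauss_L_frobenius[of j] by (metis gauss_L_cong)
  ultimately show ?thesis using gauss_L_odd_ne_zero[OF assms] by (simp add: mult.commute)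
qed

lemma gauss_L_2_squared: "gauss_L 2 * gauss_L 2 = of_nat sqrt_q"
  by (rule gauss_L_mult_inverse) simp_all

section \<open>Quartic Gauss sums of the whole field\<close>

definition gauss :: "nat \<Rightarrow> complex" where
  "gauss j = (\<Sum>x\<in>UNIV. chi j x * psi_K x)"

lemma gauss_zero: "gauss 0 = -1"
proof -
  have "gauss 0 = (\<Sum>x\<in>UNIV - {0}. psi_K x)"
    unfolding gauss_def by (simp add: sum.remove[of UNIV 0] chi_def)
  also have "\<dots> = (\<Sum>x\<in>UNIV. psi_K x) - 1" by (simp add: sum_diff1)
  finally show ?thesis using sum_psi_K by simp
qed

lemma psi_K_eq_psi_L: "psi_K x = psi (2 * r) (x + x ^ sqrt_q)"
  using psi_double[of "2 * r" x] unfolding sqrt_q_def psi_K_def by (simp add: mult_2_right)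

lemma relative_trace_in_L: "x + x ^ sqrt_q \<in> L"
  using relative_trace_in_fixfield[of x "2 * r"] unfolding sqrt_q_def by (simp add: mult_2_right)

lemma power_sqrt_q_add: "(a + b :: 'a) ^ sqrt_q = a ^ sqrt_q + b ^ sqrt_q"
  unfolding sqrt_q_def by (rule frobenius_add)

lemma power_sqrt_q_diff: "(a - b :: 'a) ^ sqrt_q = a ^ sqrt_q - b ^ sqrt_q"
  unfolding sqrt_q_def by (rule frobenius_diff)

lemma power_sqrt_q_L: "a \<in> L \<Longrightarrow> a ^ sqrt_q = a"
  unfolding fixfield_def sqrt_q_def by simp

lemma power_norm_exp: "(x::'a) ^ norm_exp = x * x ^ sqrt_q"
  unfolding norm_exp_def by simp

lemma two_nonzero: "(2::'a) \<noteq> 0"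
  using of_nat_eq_of_nat_iff[of 2 0] p_ge_3 by simp

lemma four_nonzero: "(4::'a) \<noteq> 0"
  using two_nonzero mult_eq_0_iff[of "2::'a" 2] by simp

lemma chi_L_2_square: "s \<in> L \<Longrightarrow> s \<noteq> 0 \<Longrightarrow> chi_L 2 (s * s) = 1"
  by (simp add: chi_L_mult chi_L_mult_exp chi_L_exp_trivial)

lemma chi_L_2_cases:
  assumes "d \<noteq> 0"
  shows "chi_L 2 d = 1 \<or> chi_L 2 d = -1"
proof -
  have "chi_L 2 d = \<i> ^ (dlog_L d * 2)"
    using assms unfolding chi_L_def by (simp only: if_False mult.commute)
  also have "\<dots> = (- 1) ^ dlog_L d" by (rule i_even_power)
  finally show ?thesis by (cases "even (dlog_L d)") simp_all
qed

lemma square_root_in_L: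
  assumes "d \<in> L" "d \<noteq> 0" "chi_L 2 d = 1"
  shows "\<exists>s\<in>L. s * s = d"
proof -
  have "\<i> ^ (2 * dlog_L d) = 1"
    using assms(2,3) unfolding chi_L_def by (simp del: i_even_power i_even_power')
  hence "(2 * dlog_L d) mod 4 = 0" by (simp only: i_power_eq_one_iff)
  hence "even (dlog_L d)" by presburger
  then obtain k where k: "dlog_L d = 2 * k" by blast
  define s where "s = g ^ (norm_exp * k)"
  have "s \<in> L" using L_iff_dvd_dlog[of s] unfolding s_def by (simp add: mult_norm_exp_mod_N)
  moreover have "norm_exp * dlog_L d = norm_exp * k + norm_exp * k" unfolding k by simp
  hence "s * s = g ^ dlog d"
    unfolding s_def dlog_eq_dlog_L[OF assms(1,2)] by (simp only: power_add)
  ultimately show ?thesis using assms(2) by auto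
qed

lemma square_root_of_L:
  assumes "d \<in> L"
  shows "\<exists>s. s * s = d"
proof (cases "d = 0")
  case False
  have "even norm_exp" unfolding norm_exp_def using odd_sqrt_q by simp
  then obtain c where c: "norm_exp = 2 * c" by blast
  have "norm_exp * dlog_L d = c * dlog_L d + c * dlog_L d" unfolding c by simp
  hence "g ^ (c * dlog_L d) * g ^ (c * dlog_L d) = g ^ dlog d"
    unfolding dlog_eq_dlog_L[OF assms False] by (simp only: power_add)
  thus ?thesis using False by auto
qed auto

text \<open>Fibres of the map \<open>x \<mapsto> (N(x), Tr(x))\<close> from the whole field to \<open>L \<times> L\<close>: the
  elements with norm \<open>n\<close> and trace \<open>t\<close> are the roots of \<open>X\<^sup>2 - t X + n\<close>, so their
  number is governed by the quadratic character of the discriminant \<open>t\<^sup>2 - 4 n\<close>.\<close>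

definition norm_trace_fibre :: "'a \<Rightarrow> 'a \<Rightarrow> 'a set" where
  "norm_trace_fibre n t = {x. x ^ norm_exp = n \<and> x + x ^ sqrt_q = t}"

lemma norm_trace_fibre_discriminant:
  assumes "x \<in> norm_trace_fibre n t"
  shows "(2 * x - t) * (2 * x - t) = t * t - 4 * n"
proof -
  have "x ^ sqrt_q = t - x" "x * x ^ sqrt_q = n"
    using assms power_norm_exp unfolding norm_trace_fibre_def by (auto simp: algebra_simps)
  hence n_eq: "n = x * (t - x)" by simp
  show ?thesis unfolding n_eq by (simp add: algebra_simps)
qed

lemma half_power_sqrt_q: "(a / 2 :: 'a) ^ sqrt_q = a ^ sqrt_q / 2"
proof -
  have "(2::'a) ^ sqrt_q = 2" by (rule power_sqrt_q_L) (rule numeral_in_fixfield)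
  thus ?thesis by (simp add: power_divide)
qed

lemma norm_trace_fibre_discriminant_zero:
  assumes "t \<in> L" "t * t = 4 * n"
  shows "norm_trace_fibre n t = {t / 2}"
proof (intro equalityI subsetI)
  fix x assume "x \<in> norm_trace_fibre n t"
  hence "(2 * x - t) * (2 * x - t) = 0" using norm_trace_fibre_discriminant assms(2) by simp
  hence "2 * x = t" by simp
  thus "x \<in> {t / 2}" using two_nonzero by (auto simp: field_simps)
next
  fix x assume "x \<in> {t / 2}"
  hence x: "x = t / 2" by simp
  have x_frob: "x ^ sqrt_q = t / 2" unfolding x half_power_sqrt_q power_sqrt_q_L[OF assms(1)] ..
  have "x + x ^ sqrt_q = t / 2 + t / 2" by (subst x_frob) (simp add: x)
  hence "x + x ^ sqrt_q = t" using two_nonzero by (simp add: field_simps)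
  moreover have "x ^ norm_exp = (t / 2) * (t / 2)"
    unfolding power_norm_exp by (subst x_frob) (simp add: x)
  hence "x ^ norm_exp = n" using assms(2) four_nonzero by (simp add: field_simps)
  ultimately show "x \<in> norm_trace_fibre n t" unfolding norm_trace_fibre_def by simp
qed

lemma norm_trace_fibre_square_discriminant:
  assumes "t \<in> L" "s \<in> L" "s * s = t * t - 4 * n" "s \<noteq> 0"
  shows "norm_trace_fibre n t = {}"
proof (rule ccontr)
  assume "norm_trace_fibre n t \<noteq> {}"
  then obtain x where x: "x \<in> norm_trace_fibre n t" by blast
  have "(2 * x - t) * (2 * x - t) = s * s" using norm_trace_fibre_discriminant[OF x] assms(3) by simp
  hence "2 * x - t = s \<or> 2 * x - t = - s" by (simp only: square_eq_iff)
  hence "2 * x \<in> L" using assms(1,2) by (metis diff_add_cancel fixfield_add fixfield_minus)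
  hence "x \<in> L" using fixfield_divide[OF _ numeral_in_fixfield, of "2 * x" _ "Num.Bit0 Num.One"]
    two_nonzero by simp
  hence "x + x = t" using x power_sqrt_q_L unfolding norm_trace_fibre_def by auto
  hence "s * s = 0" using norm_trace_fibre_discriminant[OF x] assms(3) by (simp add: algebra_simps)
  thus False using assms(4) by simp
qed

lemma card_norm_trace_fibre_nonsquare:
  assumes "t \<in> L" "n \<in> L" "s * s = t * t - 4 * n" "s \<notin> L"
  shows "card (norm_trace_fibre n t) = 2"
proof -
  have s_ne_0: "s \<noteq> 0" using assms(4) by auto
  have "t * t - 4 * n \<in> L"
    using assms(1,2) by (intro fixfield_diff fixfield_mult numeral_in_fixfield)
  hence "(s * s) ^ sqrt_q = s * s" using assms(3) power_sqrt_q_L by simp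
  hence "s ^ sqrt_q * s ^ sqrt_q = s * s" by (simp add: power_mult_distrib)
  hence "s ^ sqrt_q = s \<or> s ^ sqrt_q = - s" by (simp only: square_eq_iff)
  moreover have "s ^ sqrt_q \<noteq> s" using assms(4) unfolding fixfield_def sqrt_q_def by simp
  ultimately have s_frob: "s ^ sqrt_q = - s" by simp
  define x1 where "x1 = (t + s) / 2"
  define x2 where "x2 = (t - s) / 2"
  have x1_frob: "x1 ^ sqrt_q = x2" and x2_frob: "x2 ^ sqrt_q = x1"
    unfolding x1_def x2_def half_power_sqrt_q power_sqrt_q_add power_sqrt_q_diff s_frob
      power_sqrt_q_L[OF assms(1)] by simp_all
  have "x1 * x2 = n" using assms(3) four_nonzero unfolding x1_def x2_def by (simp add: field_simps)
  moreover have "x1 + x2 = t" using two_nonzero four_nonzero unfolding x1_def x2_def by (simp add: field_simps)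
  ultimately have "{x1, x2} \<subseteq> norm_trace_fibre n t"
    unfolding norm_trace_fibre_def power_norm_exp using x1_frob x2_frob by (auto simp: ac_simps)
  moreover have "norm_trace_fibre n t \<subseteq> {x1, x2}"
  proof
    fix x assume "x \<in> norm_trace_fibre n t"
    hence "(2 * x - t) * (2 * x - t) = s * s" using norm_trace_fibre_discriminant assms(3) by simp
    hence "2 * x - t = s \<or> 2 * x - t = - s" by (simp only: square_eq_iff)
    thus "x \<in> {x1, x2}" unfolding x1_def x2_def using two_nonzero by (auto simp: field_simps)
  qed
  ultimately have "norm_trace_fibre n t = {x1, x2}" by blast
  moreover have "x1 \<noteq> x2" using s_ne_0 two_nonzero four_nonzero unfolding x1_def x2_def
    by (simp add: field_simps)
  ultimately show ?thesis by simp
qed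

lemma card_norm_trace_fibre:
  assumes "t \<in> L" "n \<in> L" "n \<noteq> 0"
  shows "of_nat (card (norm_trace_fibre n t)) = 1 - chi_L 2 (t * t - 4 * n)"
proof -
  define D where "D = t * t - 4 * n"
  have D_L: "D \<in> L" unfolding D_def
    using assms by (intro fixfield_diff fixfield_mult numeral_in_fixfield)
  consider "D = 0" | "D \<noteq> 0" "chi_L 2 D = 1" | "D \<noteq> 0" "chi_L 2 D = -1"
    using chi_L_2_cases[of D] by blast
  thus ?thesis
  proof cases
    case 1
    thus ?thesis using norm_trace_fibre_discriminant_zero[OF assms(1)] unfolding D_def by simp
  next
    case 2
    then obtain s where s: "s \<in> L" "s * s = D" using square_root_in_L[OF D_L] by blast
    hence "s \<noteq> 0" using 2 by auto
    thus ?thesis using norm_trace_fibre_square_discriminant[OF assms(1) s(1)] s(2) 2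
      unfolding D_def by simp
  next
    case 3
    obtain s where s: "s * s = D" using square_root_of_L[OF D_L] by blast
    have "s \<notin> L" using chi_L_2_square[of s] s 3 by auto
    thus ?thesis using card_norm_trace_fibre_nonsquare[OF assms(1,2)] s 3 unfolding D_def by simp
  qed
qed

text \<open>Grouping the Gauss sum by norm and trace expresses it through characters of \<open>L\<close>
  (a Davenport--Hasse type relation).\<close>

lemma gauss_eq_sum_L:
  "gauss j = - (\<Sum>t\<in>L. psi (2 * r) t * (\<Sum>n\<in>L - {0}. chi_L j n * chi_L 2 (t * t - 4 * n)))"
proof -
  define nt where "nt x = (x ^ norm_exp, x + x ^ sqrt_q)" for x :: 'a
  define f where "f z = chi_L j (fst z) * psi (2 * r) (snd z)" for z :: "'a \<times> 'a"
  define c where "c n t = chi_L 2 (t * t - 4 * n)" for n t :: 'a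
  have "gauss j = (\<Sum>x\<in>UNIV - {0}. chi j x * psi_K x)"
    unfolding gauss_def by (simp add: sum.remove[of UNIV 0])
  also have "\<dots> = (\<Sum>x\<in>UNIV - {0}. f (nt x))"
    unfolding f_def nt_def by (rule sum.cong[OF refl]) (simp add: chi_L_norm psi_K_eq_psi_L)
  also have "\<dots> = (\<Sum>z\<in>(L - {0}) \<times> L. \<Sum>x\<in>{x \<in> UNIV - {0}. nt x = z}. f (nt x))"
  proof (rule sum.group[symmetric])
    show "nt ` (UNIV - {0}) \<subseteq> (L - {0}) \<times> L"
      unfolding nt_def using norm_in_L relative_trace_in_L by auto
  qed simp_all
  also have "\<dots> = (\<Sum>z\<in>(L - {0}) \<times> L. (1 - c (fst z) (snd z)) * f z)"
  proof (rule sum.cong[OF refl])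
    fix z assume "z \<in> (L - {0}) \<times> L"
    then obtain n t where z: "z = (n, t)" "n \<in> L" "n \<noteq> 0" "t \<in> L" by auto
    have fibre: "{x \<in> UNIV - {0}. nt x = z} = norm_trace_fibre n t"
      unfolding nt_def norm_trace_fibre_def z(1) using z(3) by auto
    have "(\<Sum>x\<in>{x \<in> UNIV - {0}. nt x = z}. f (nt x)) = (\<Sum>x\<in>{x \<in> UNIV - {0}. nt x = z}. f z)"
      by (rule sum.cong) simp_all
    also have "\<dots> = of_nat (card (norm_trace_fibre n t)) * f z" unfolding fibre by simp
    also have "of_nat (card (norm_trace_fibre n t)) = 1 - c n t"
      unfolding c_def using z by (intro card_norm_trace_fibre)
    finally show "(\<Sum>x\<in>{x \<in> UNIV - {0}. nt x = z}. f (nt x)) = (1 - c (fst z) (snd z)) * f z"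
      unfolding z(1) by simp
  qed
  also have "\<dots> = (\<Sum>n\<in>L - {0}. \<Sum>t\<in>L. (1 - c n t) * (chi_L j n * psi (2 * r) t))"
    unfolding f_def by (simp add: sum.cartesian_product')
  also have "\<dots> = (\<Sum>n\<in>L - {0}. chi_L j n * (\<Sum>t\<in>L. psi (2 * r) t)) -
      (\<Sum>n\<in>L - {0}. \<Sum>t\<in>L. c n t * chi_L j n * psi (2 * r) t)"
    by (simp add: sum_subtractf[symmetric] sum_distrib_left algebra_simps)
  also have "(\<Sum>t\<in>L. psi (2 * r) t) = 0" by (rule sum_psi) simp
  also have "(\<Sum>n\<in>L - {0}. \<Sum>t\<in>L. c n t * chi_L j n * psi (2 * r) t) =
      (\<Sum>t\<in>L. psi (2 * r) t * (\<Sum>n\<in>L - {0}. chi_L j n * c n t))"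
    by (subst sum.swap) (simp add: sum_distrib_left ac_simps)
  finally show ?thesis unfolding c_def by simp
qed

lemma chi_L_quarter_square:
  assumes "odd j" "t \<in> L"
  shows "chi_L j (t * t / 4) = chi_L 2 t"
proof -
  have inv_4: "inverse 4 \<in> fixfield d" for d by (intro fixfield_inverse numeral_in_fixfield)
  have "chi_L j (t * t / 4) = chi_L j (t * t) * chi_L j (inverse 4)"
    unfolding divide_inverse using assms(2) inv_4 by (intro chi_L_mult fixfield_mult)
  also have "chi_L j (inverse 4) = 1" using chi_L_prime_field inv_4 four_nonzero by simp
  also have "chi_L j (t * t) = chi_L (j + j) t" using chi_L_mult[OF assms(2,2)] chi_L_mult_exp by simp
  also have "(j + j) mod 4 = 2 mod 4" using assms(1) by presburger
  hence "chi_L (j + j) t = chi_L 2 t" by (rule chi_L_cong)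
  finally show ?thesis by simp
qed

lemma sum_chi_L_discriminant:
  assumes "odd j" "t \<in> L"
  shows "(\<Sum>n\<in>L - {0}. chi_L j n * chi_L 2 (t * t - 4 * n)) = chi_L 2 t * jacobi_L j 2"
proof (cases "t = 0")
  case True
  have "chi_L 2 (- (4 * n)) = chi_L 2 n" if "n \<in> L" for n
    using that chi_L_prime_field[OF numeral_in_fixfield four_nonzero]
    by (simp add: chi_L_minus chi_L_mult numeral_in_fixfield fixfield_mult)
  hence "(\<Sum>n\<in>L - {0}. chi_L j n * chi_L 2 (t * t - 4 * n)) = (\<Sum>n\<in>L - {0}. chi_L (j + 2) n)"
    using True by (intro sum.cong refl) (simp add: chi_L_mult_exp)
  also have "\<dots> = (\<Sum>n\<in>L. chi_L (j + 2) n)" using sum.remove[of L 0 "chi_L (j + 2)"] by simp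
  also have "\<dots> = 0" by (rule sum_chi_L) (use assms in presburger)
  finally show ?thesis using True by simp
next
  case False
  define c where "c = t * t / 4"
  have c: "c \<in> L" "c \<noteq> 0" "4 * c = t * t" "chi_L j c = chi_L 2 t"
    using assms False four_nonzero chi_L_quarter_square unfolding c_def
    by (auto intro: fixfield_divide fixfield_mult numeral_in_fixfield)
  have "(\<Sum>n\<in>L - {0}. chi_L j n * chi_L 2 (t * t - 4 * n)) =
      (\<Sum>m\<in>L - {0}. chi_L j (c * m) * chi_L 2 (t * t - 4 * (c * m)))"
    by (rule sum.reindex_bij_witness[of _ "\<lambda>m. c * m" "\<lambda>n. n / c"])
      (use c fixfield_mult fixfield_divide in auto)
  also have "\<dots> = (\<Sum>m\<in>L - {0}. chi_L 2 t * (chi_L j m * chi_L 2 (1 - m)))"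
  proof (rule sum.cong[OF refl])
    fix m assume m: "m \<in> L - {0}"
    have "t * t - 4 * (c * m) = (t * t) * (1 - m)" using c(3) by (simp add: algebra_simps)
    moreover have "chi_L 2 (t * t) = 1" using chi_L_2_square assms(2) False by simp
    ultimately show "chi_L j (c * m) * chi_L 2 (t * t - 4 * (c * m)) =
        chi_L 2 t * (chi_L j m * chi_L 2 (1 - m))"
      using m c assms(2) by (simp add: chi_L_mult fixfield_mult fixfield_diff)
  qed
  also have "\<dots> = chi_L 2 t * jacobi_L j 2"
    unfolding jacobi_L_def by (simp add: sum_distrib_left sum.remove[of L 0])
  finally show ?thesis .
qed

lemma gauss_odd:
  assumes "odd j"
  shows "gauss j = - of_nat sqrt_q"
proof -
  have "(\<Sum>t\<in>L. psi (2 * r) t * (\<Sum>n\<in>L - {0}. chi_L j n * chi_L 2 (t * t - 4 * n))) =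
      (\<Sum>t\<in>L. jacobi_L j 2 * (chi_L 2 t * psi (2 * r) t))"
    by (rule sum.cong[OF refl]) (simp add: sum_chi_L_discriminant[OF assms])
  also have "\<dots> = jacobi_L j 2 * gauss_L 2" unfolding gauss_L_def by (simp add: sum_distrib_left)
  finally show ?thesis
    unfolding gauss_eq_sum_L using jacobi_L_odd_2[OF assms] gauss_L_2_squared by simp
qed

section \<open>The spectrum of the Peisert graph\<close>

definition peisert_set :: "'a set" where
  "peisert_set = {s. s \<noteq> 0 \<and> (dlog s mod 4 = 0 \<or> dlog s mod 4 = 1)}"

text \<open>The set \<open>B\<close> of the statement: the \<open>y\<close> whose eigenvalue \<open>eigenvalue (- y)\<close> is negative.\<close>

definition B_set :: "'a set" where
  "B_set = {s. s \<noteq> 0 \<and> (dlog s mod 4 = 0 \<or> dlog s mod 4 = 3)}"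

definition eigenvalue :: "'a \<Rightarrow> complex" where
  "eigenvalue y = (\<Sum>s\<in>peisert_set. psi_K (y * s))"

lemma peisert_adj_iff: "peisert_adj g x y \<longleftrightarrow> x - y \<in> peisert_set"
proof
  assume "peisert_adj g x y"
  hence "x \<noteq> y" "\<exists>j::nat. (j mod 4 = 0 \<or> j mod 4 = 1) \<and> x - y = g ^ j"
    unfolding peisert_adj_def by simp_all
  then obtain j :: nat where "(j mod 4 = 0 \<or> j mod 4 = 1) \<and> x - y = g ^ j" by (elim exE)
  hence j: "j mod 4 = 0 \<or> j mod 4 = 1" "x - y = g ^ j" by simp_all
  hence "dlog (x - y) mod 4 = j mod 4" using four_dvd_N by (simp add: mod_mod_cancel)
  thus "x - y \<in> peisert_set" unfolding peisert_set_def using j \<open>x \<noteq> y\<close> by simp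
next
  assume "x - y \<in> peisert_set"
  thus "peisert_adj g x y" unfolding peisert_set_def peisert_adj_def
    by (intro conjI exI[of _ "dlog (x - y)"]) auto
qed

text \<open>Fourier expansion of the indicator of \<open>peisert_set\<close>, a union of two cosets of the
  fourth powers, in the characters \<open>chi j\<close> of the quotient by the fourth powers.\<close>

lemma indicator_peisert_set:
  assumes "s \<noteq> 0"
  shows "(if s \<in> peisert_set then 1 else 0) = (1/4) * (\<Sum>j<4. (1 + \<i> ^ (3 * j)) * chi j s)"
proof -
  define c where "c = dlog s mod 4"
  have "c < 4" unfolding c_def by simp
  hence "c = 0 \<or> c = 1 \<or> c = 2 \<or> c = 3" by linarith
  thus ?thesis unfolding peisert_set_def mem_Collect_eq sum_lessThan_4 chi_eq[OF assms] c_def[symmetric]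
    using assms by (elim disjE) (simp_all add: i_power_eq field_simps)
qed

lemma sum_chi_psi_scaled:
  assumes "y \<noteq> 0"
  shows "(\<Sum>s\<in>UNIV. chi j s * psi_K (y * s)) = chi (3 * j) y * gauss j"
proof -
  have "gauss j = (\<Sum>s\<in>UNIV. chi j (y * s) * psi_K (y * s))" unfolding gauss_def
    by (rule sum.reindex_bij_witness[of _ "\<lambda>s. y * s" "\<lambda>x. x / y"]) (use assms in auto)
  also have "\<dots> = chi j y * (\<Sum>s\<in>UNIV. chi j s * psi_K (y * s))"
    by (simp add: chi_mult sum_distrib_left ac_simps)
  finally have "chi (3 * j) y * gauss j = (chi (3 * j) y * chi j y) * (\<Sum>s\<in>UNIV. chi j s * psi_K (y * s))"
    by (simp add: ac_simps)
  also have "chi (3 * j) y * chi j y = 1" using chi_mult_exp chi_exp_trivial[OF assms] by simp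
  finally show ?thesis by simp
qed

lemma eigenvalue_eq_gauss_sums:
  assumes "y \<noteq> 0"
  shows "eigenvalue y = (1/4) * (\<Sum>j<4. (1 + \<i> ^ (3 * j)) * (chi (3 * j) y * gauss j))"
proof -
  have "eigenvalue y = (\<Sum>s\<in>UNIV - {0}. (if s \<in> peisert_set then 1 else 0) * psi_K (y * s))"
    unfolding eigenvalue_def peisert_set_def by (intro sum.mono_neutral_cong_left) auto
  also have "\<dots> = (\<Sum>s\<in>UNIV - {0}. (1/4) * (\<Sum>j<4. (1 + \<i> ^ (3 * j)) * (chi j s * psi_K (y * s))))"
    by (rule sum.cong[OF refl]) (simp add: indicator_peisert_set sum_distrib_right mult.assoc)
  also have "\<dots> = (1/4) * (\<Sum>j<4. (1 + \<i> ^ (3 * j)) * (\<Sum>s\<in>UNIV - {0}. chi j s * psi_K (y * s)))"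
    by (simp add: sum_distrib_left sum.swap[of _ "UNIV - {0}"])
  also have "(\<Sum>s\<in>UNIV - {0}. chi j s * psi_K (y * s)) = chi (3 * j) y * gauss j" for j
    using sum_chi_psi_scaled[OF assms, of j] by (simp add: sum.remove[of UNIV 0])
  hence "(1/4) * (\<Sum>j<4. (1 + \<i> ^ (3 * j)) * (\<Sum>s\<in>UNIV - {0}. chi j s * psi_K (y * s))) =
      (1/4) * (\<Sum>j<4. (1 + \<i> ^ (3 * j)) * (chi (3 * j) y * gauss j))" by simp
  finally show ?thesis .
qed

text \<open>Only \<open>gauss 0 = -1\<close> and \<open>gauss 1 = gauss 3 = -sqrt_q\<close> matter: the coefficient
  \<open>1 + \<i> ^ 6\<close> of \<open>gauss 2\<close> vanishes.\<close>

lemma eigenvalue_nonzero: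
  assumes "y \<noteq> 0"
  shows "eigenvalue y = (if dlog y mod 4 = 1 \<or> dlog y mod 4 = 2
    then (of_nat sqrt_q - 1) / 2 else - (of_nat sqrt_q + 1) / 2)"
proof -
  define c where "c = dlog y mod 4"
  have chi_y: "chi k y = \<i> ^ (k * c)" for k
    unfolding chi_eq[OF assms] c_def by (rule i_power_cong) (simp add: mod_mult_right_eq)
  have "c < 4" unfolding c_def by simp
  hence "c = 0 \<or> c = 1 \<or> c = 2 \<or> c = 3" by linarith
  thus ?thesis
    unfolding eigenvalue_eq_gauss_sums[OF assms] sum_lessThan_4 c_def[symmetric] chi_y
    using gauss_zero gauss_odd[of 1] gauss_odd[of 3]
    by (elim disjE) (simp_all add: i_power_eq field_simps)
qed

lemma card_peisert_set: "card peisert_set = N div 2"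
proof -
  obtain m where m: "N = 4 * m" using four_dvd_N by blast
  define A0 where "A0 = (\<lambda>i. 4 * i) ` {..<m}"
  define A1 where "A1 = (\<lambda>i. 4 * i + 1) ` {..<m}"
  have "peisert_set = (\<lambda>k. g ^ k) ` (A0 \<union> A1)"
  proof (intro equalityI subsetI)
    fix s assume s: "s \<in> peisert_set"
    hence "s \<noteq> 0" unfolding peisert_set_def by simp
    hence "dlog s div 4 < m" using dlog_less[of s] m by simp
    moreover have "dlog s mod 4 = 0 \<or> dlog s mod 4 = 1" using s unfolding peisert_set_def by simp
    hence "dlog s = 4 * (dlog s div 4) \<or> dlog s = 4 * (dlog s div 4) + 1" by presburger
    ultimately have "dlog s \<in> A0 \<union> A1" unfolding A0_def A1_def by blast
    thus "s \<in> (\<lambda>k. g ^ k) ` (A0 \<union> A1)" using \<open>s \<noteq> 0\<close> by (metis generator_power_dlog image_eqI)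
  next
    fix s assume "s \<in> (\<lambda>k. g ^ k) ` (A0 \<union> A1)"
    then obtain k where k: "k \<in> A0 \<union> A1" "s = g ^ k" by blast
    have "k < N \<and> (k mod 4 = 0 \<or> k mod 4 = 1)" using k(1) m unfolding A0_def A1_def by auto
    thus "s \<in> peisert_set" unfolding peisert_set_def using k(2) by simp
  qed
  moreover have "A0 \<union> A1 \<subseteq> {..<N}" unfolding A0_def A1_def using m by auto
  hence "inj_on (\<lambda>k. g ^ k) (A0 \<union> A1)" by (rule inj_on_subset[OF inj_on_generator_powers])
  moreover have "card (A0 \<union> A1) = m + m"
  proof -
    have "A0 \<inter> A1 = {}" unfolding A0_def A1_def by auto presburger
    moreover have "card A0 = m" "card A1 = m"
      unfolding A0_def A1_def by (simp_all add: card_image inj_on_def)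
    ultimately show ?thesis by (simp add: card_Un_disjoint A0_def A1_def)
  qed
  ultimately show ?thesis using m by (simp add: card_image)
qed

lemma eigenvalue_zero: "eigenvalue 0 = (of_nat sqrt_q * of_nat sqrt_q - 1) / 2"
proof -
  have "2 * (N div 2) = N" using four_dvd_N by auto
  moreover have "N + 1 = sqrt_q * sqrt_q" using N_eq card_field_sqrt_q sqrt_q_ge_9 by simp
  ultimately have "2 * of_nat (N div 2) + (1 :: complex) = of_nat sqrt_q * of_nat sqrt_q"
    by (metis of_nat_1 of_nat_add of_nat_mult of_nat_numeral)
  thus ?thesis unfolding eigenvalue_def card_peisert_set[symmetric] by (simp add: field_simps)
qed

lemma dlog_minus_one: "dlog (- 1 :: 'a) = N div 2"
proof -
  define z where "z = g ^ (N div 2)"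
  have "z * z = g ^ (N div 2 + N div 2)" unfolding z_def by (simp add: power_add)
  also have "N div 2 + N div 2 = N" using four_dvd_N by auto
  finally have "z * z = 1 * 1" using power_N_eq_one by simp
  hence "z = 1 \<or> z = - 1" by (simp only: square_eq_iff)
  moreover have "z \<noteq> 1"
    unfolding z_def generator_power_eq_one_iff using N_pos four_dvd_N by (auto dest: dvd_imp_le)
  ultimately have "- 1 = g ^ (N div 2)" unfolding z_def by simp
  thus ?thesis using N_pos by simp
qed

lemma dlog_minus_mod_4:
  assumes "y \<noteq> 0"
  shows "dlog (- y) mod 4 = dlog y mod 4"
proof -
  have "4 dvd N div 2" using eight_dvd_N by auto
  hence "dlog (- 1 :: 'a) mod 4 = 0" by (simp add: dlog_minus_one)
  thus ?thesis using dlog_mod_4_mult[of "- 1" y] assms by (simp add: mod_add_left_eq[symmetric])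
qed

lemma eigenvalue_minus:
  assumes "y \<noteq> 0"
  shows "eigenvalue (- y) =
    (if y \<in> B_set then - (of_nat sqrt_q + 1) / 2 else (of_nat sqrt_q - 1) / 2)"
proof -
  have "dlog y mod 4 < 4" by simp
  thus ?thesis using eigenvalue_nonzero[of "- y"] dlog_minus_mod_4[OF assms] assms
    unfolding B_set_def by auto
qed

section \<open>Cliques that are additive subgroups\<close>

definition annihilator :: "'a set \<Rightarrow> 'a set" where
  "annihilator W = {y. \<forall>x\<in>W. psi_K (x * y) = 1}"

lemma sum_psi_additive_subgroup:
  assumes "additive_subgroup W"
  shows "(\<Sum>x\<in>W. psi_K (x * y)) = (if y \<in> annihilator W then of_nat (card W) else 0)"
proof (cases "y \<in> annihilator W")
  case True
  hence "(\<Sum>x\<in>W. psi_K (x * y)) = (\<Sum>x\<in>W. 1)" unfolding annihilator_def by simp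
  thus ?thesis using True by simp
next
  case False
  then obtain x0 where x0: "x0 \<in> W" "psi_K (x0 * y) \<noteq> 1" unfolding annihilator_def by auto
  have "(\<Sum>x\<in>W. psi_K (x * y)) = (\<Sum>x\<in>W. psi_K ((x + x0) * y))"
    by (rule sum.reindex_bij_witness[of _ "\<lambda>x. x + x0" "\<lambda>x. x - x0"])
      (use assms x0(1) additive_subgroup_diff in \<open>auto simp: additive_subgroup_def\<close>)
  also have "\<dots> = (\<Sum>x\<in>W. psi_K (x0 * y) * psi_K (x * y))"
  proof (rule sum.cong[OF refl])
    fix x
    have "psi_K ((x + x0) * y) = psi_K (x * y) * psi_K (x0 * y)"
      unfolding distrib_right by (rule psi_K_add)
    thus "psi_K ((x + x0) * y) = psi_K (x0 * y) * psi_K (x * y)" by (simp only: mult.commute)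
  qed
  also have "\<dots> = psi_K (x0 * y) * (\<Sum>x\<in>W. psi_K (x * y))" by (rule sum_distrib_left[symmetric])
  finally have "(1 - psi_K (x0 * y)) * (\<Sum>x\<in>W. psi_K (x * y)) = 0"
    by (simp add: algebra_simps)
  thus ?thesis using x0(2) False by simp
qed

lemma sum_psi_additive_subgroup_minus:
  "additive_subgroup W \<Longrightarrow> (\<Sum>x\<in>W. psi_K (- (x * y))) = (\<Sum>x\<in>W. psi_K (x * y))"
  by (rule sum.reindex_bij_witness[of _ uminus uminus]) (auto simp: additive_subgroup_def)

lemma psi_K_mult_diff: "psi_K (y * (x - x')) = psi_K (x * y) * psi_K (- (x' * y))"
proof -
  have "y * (x - x') = x * y + - (x' * y)" by (simp add: algebra_simps)
  thus ?thesis by (simp only: psi_K_add)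
qed

text \<open>Parseval's identity for the indicator function of \<open>W\<close>.\<close>

lemma card_mult_card_annihilator:
  assumes "additive_subgroup W"
  shows "card W * card (annihilator W) = p ^ (4 * r)"
proof -
  define S where "S = (\<Sum>y\<in>UNIV. \<Sum>x\<in>W. \<Sum>x'\<in>W. psi_K (y * (x - x')))"
  have "S = (\<Sum>x\<in>W. \<Sum>x'\<in>W. \<Sum>y\<in>UNIV. psi_K (y * (x - x')))"
    unfolding S_def by (subst sum.swap) (subst (2) sum.swap, rule refl)
  also have "\<dots> = (\<Sum>x\<in>W. \<Sum>x'\<in>W. if x' = x then of_nat (p ^ (4 * r)) else 0)"
    by (intro sum.cong refl) (auto simp: sum_psi_K_mult)
  finally have S1: "S = of_nat (card W) * of_nat (p ^ (4 * r))" by simp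
  have "S = (\<Sum>y\<in>UNIV. (\<Sum>x\<in>W. psi_K (x * y)) * (\<Sum>x'\<in>W. psi_K (- (x' * y))))"
    unfolding S_def by (intro sum.cong refl) (simp add: psi_K_mult_diff sum_product)
  also have "\<dots> = (\<Sum>y\<in>UNIV. if y \<in> annihilator W then of_nat (card W) * of_nat (card W) else 0)"
    by (intro sum.cong refl)
      (simp add: sum_psi_additive_subgroup_minus[OF assms] sum_psi_additive_subgroup[OF assms])
  finally have S2: "S = of_nat (card (annihilator W)) * (of_nat (card W) * of_nat (card W))"
    by (simp add: sum.If_cases)
  have "card W * (card W * card (annihilator W)) = card W * p ^ (4 * r)"
    using S1 S2 by (metis of_nat_eq_iff of_nat_mult mult.commute mult.assoc)
  moreover have "card W \<noteq> 0" using assms unfolding additive_subgroup_def by auto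
  ultimately show ?thesis by simp
qed

lemma indicator_peisert_set_fourier:
  "of_nat (p ^ (4 * r)) * (if z \<in> peisert_set then 1 else 0) =
    (\<Sum>s\<in>peisert_set. \<Sum>y\<in>UNIV. psi_K (y * (z - s)))"
proof -
  have "(\<Sum>s\<in>peisert_set. \<Sum>y\<in>UNIV. psi_K (y * (z - s))) =
      (\<Sum>s\<in>peisert_set. if s = z then of_nat (p ^ (4 * r)) else 0)"
    by (intro sum.cong refl) (auto simp: sum_psi_K_mult)
  thus ?thesis by (simp add: sum.delta')
qed

lemma indicator_peisert_set_pair:
  "(if x - x' \<in> peisert_set then 1 else 0) * of_nat (p ^ (4 * r)) =
    (\<Sum>y\<in>UNIV. psi_K (x * y) * psi_K (- (x' * y)) * eigenvalue (- y))"
proof -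
  have "psi_K (y * (x - x' - s)) = psi_K (x * y) * psi_K (- (x' * y)) * psi_K (- y * s)" for y s
  proof -
    have "y * (x - x' - s) = x * y + - (x' * y) + - y * s" by (simp add: algebra_simps)
    thus ?thesis by (simp only: psi_K_add)
  qed
  hence "(if x - x' \<in> peisert_set then 1 else 0) * of_nat (p ^ (4 * r)) =
      (\<Sum>s\<in>peisert_set. \<Sum>y\<in>UNIV. psi_K (x * y) * psi_K (- (x' * y)) * psi_K (- y * s))"
    using indicator_peisert_set_fourier[of "x - x'"] by (simp add: mult.commute)
  also have "\<dots> = (\<Sum>y\<in>UNIV. \<Sum>s\<in>peisert_set. psi_K (x * y) * psi_K (- (x' * y)) * psi_K (- y * s))"
    by (rule sum.swap)
  finally show ?thesis unfolding eigenvalue_def by (simp add: sum_distrib_left)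
qed

lemma card_edges_fourier:
  "of_nat (card {z \<in> W \<times> W. fst z - snd z \<in> peisert_set}) * of_nat (p ^ (4 * r)) =
    (\<Sum>y\<in>UNIV. (\<Sum>x\<in>W. psi_K (x * y)) * (\<Sum>x'\<in>W. psi_K (- (x' * y))) * eigenvalue (- y))"
proof -
  have "of_nat (card {z \<in> W \<times> W. fst z - snd z \<in> peisert_set}) =
      (\<Sum>z\<in>W \<times> W. if fst z - snd z \<in> peisert_set then 1 else 0 :: complex)"
    by (simp add: sum.If_cases Int_def)
  also have "\<dots> = (\<Sum>x\<in>W. \<Sum>x'\<in>W. if x - x' \<in> peisert_set then 1 else 0)"
    by (simp add: sum.cartesian_product')
  finally have card_eq: "of_nat (card {z \<in> W \<times> W. fst z - snd z \<in> peisert_set}) =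
      (\<Sum>x\<in>W. \<Sum>x'\<in>W. if x - x' \<in> peisert_set then 1 else 0 :: complex)" .
  have "of_nat (card {z \<in> W \<times> W. fst z - snd z \<in> peisert_set}) * of_nat (p ^ (4 * r)) =
      (\<Sum>x\<in>W. \<Sum>x'\<in>W. \<Sum>y\<in>UNIV. psi_K (x * y) * psi_K (- (x' * y)) * eigenvalue (- y))"
    unfolding card_eq sum_distrib_right by (intro sum.cong refl) (rule indicator_peisert_set_pair)
  also have "\<dots> = (\<Sum>y\<in>UNIV. \<Sum>x\<in>W. \<Sum>x'\<in>W. psi_K (x * y) * psi_K (- (x' * y)) * eigenvalue (- y))"
    by (subst sum.swap, rule sum.cong[OF refl], rule sum.swap)
  also have "\<dots> = (\<Sum>y\<in>UNIV. (\<Sum>x\<in>W. psi_K (x * y)) * (\<Sum>x'\<in>W. psi_K (- (x' * y))) * eigenvalue (- y))"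
  proof (rule sum.cong[OF refl])
    fix y
    have "(\<Sum>x\<in>W. \<Sum>x'\<in>W. psi_K (x * y) * psi_K (- (x' * y)) * eigenvalue (- y)) =
        (\<Sum>x\<in>W. \<Sum>x'\<in>W. psi_K (x * y) * psi_K (- (x' * y))) * eigenvalue (- y)"
      by (simp add: sum_distrib_right)
    thus "(\<Sum>x\<in>W. \<Sum>x'\<in>W. psi_K (x * y) * psi_K (- (x' * y)) * eigenvalue (- y)) =
        (\<Sum>x\<in>W. psi_K (x * y)) * (\<Sum>x'\<in>W. psi_K (- (x' * y))) * eigenvalue (- y)"
      by (simp only: sum_product)
  qed
  finally show ?thesis .
qed

lemma card_edges_additive_subgroup:
  assumes "additive_subgroup W"
  shows "of_nat (card {z \<in> W \<times> W. fst z - snd z \<in> peisert_set}) * of_nat (p ^ (4 * r)) =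
    of_nat (card W) * of_nat (card W) * (\<Sum>y\<in>annihilator W. eigenvalue (- y))"
proof -
  have "(\<Sum>y\<in>UNIV. (\<Sum>x\<in>W. psi_K (x * y)) * (\<Sum>x'\<in>W. psi_K (- (x' * y))) * eigenvalue (- y)) =
      (\<Sum>y\<in>UNIV. if y \<in> annihilator W then of_nat (card W) * of_nat (card W) * eigenvalue (- y) else 0)"
    by (intro sum.cong refl)
      (simp add: sum_psi_additive_subgroup_minus[OF assms] sum_psi_additive_subgroup[OF assms])
  also have "\<dots> = of_nat (card W) * of_nat (card W) * (\<Sum>y\<in>annihilator W. eigenvalue (- y))"
    by (simp add: sum.If_cases sum_distrib_left)
  finally show ?thesis unfolding card_edges_fourier .
qed

lemma card_annihilator_sqrt_q:
  assumes "additive_subgroup W" "card W = sqrt_q"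
  shows "card (annihilator W) = sqrt_q"
  using card_mult_card_annihilator[OF assms(1)] assms(2) sqrt_q_ge_9
  unfolding card_field_sqrt_q by simp

lemma zero_in_annihilator: "0 \<in> annihilator W"
  unfolding annihilator_def by simp

lemma sum_eigenvalue_minus_split:
  assumes "0 \<in> A"
  shows "(\<Sum>y\<in>A. eigenvalue (- y)) = eigenvalue 0
    + of_nat (card (A \<inter> B_set)) * (- (of_nat sqrt_q + 1) / 2)
    + of_nat (card (A - {0} - B_set)) * ((of_nat sqrt_q - 1) / 2)"
proof -
  have "(\<Sum>y\<in>A - {0}. eigenvalue (- y)) =
      (\<Sum>y\<in>(A \<inter> B_set) \<union> ((A - {0}) - B_set). eigenvalue (- y))"
    by (rule arg_cong[where f = "sum _"]) (auto simp: B_set_def)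
  also have "\<dots> = (\<Sum>y\<in>A \<inter> B_set. eigenvalue (- y)) + (\<Sum>y\<in>(A - {0}) - B_set. eigenvalue (- y))"
    by (rule sum.union_disjoint) auto
  also have "(\<Sum>y\<in>A \<inter> B_set. eigenvalue (- y)) =
      of_nat (card (A \<inter> B_set)) * (- (of_nat sqrt_q + 1) / 2)"
    by (simp add: eigenvalue_minus B_set_def)
  also have "(\<Sum>y\<in>(A - {0}) - B_set. eigenvalue (- y)) =
      of_nat (card (A - {0} - B_set)) * ((of_nat sqrt_q - 1) / 2)"
    by (simp add: eigenvalue_minus)
  finally show ?thesis using assms by (simp add: sum.remove[of A 0])
qed

lemma sum_eigenvalue_minus:
  assumes "0 \<in> A" "card A = sqrt_q"
  shows "(\<Sum>y\<in>A. eigenvalue (- y)) =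
    of_nat sqrt_q * (of_nat sqrt_q - 1) - of_nat (card (A \<inter> B_set)) * of_nat sqrt_q"
proof -
  define b where "b = card (A \<inter> B_set)"
  have A_B: "A \<inter> B_set \<subseteq> A - {0}" unfolding B_set_def by auto
  hence b_le: "b \<le> sqrt_q - 1" using card_mono[OF _ A_B] assms unfolding b_def by simp
  have "A - {0} - B_set = (A - {0}) - (A \<inter> B_set)" by auto
  hence "card (A - {0} - B_set) = sqrt_q - 1 - b"
    using assms A_B unfolding b_def by (simp add: card_Diff_subset)
  hence "of_nat (card (A - {0} - B_set)) = (of_nat sqrt_q - 1 - of_nat b :: complex)"
    using b_le sqrt_q_ge_9 by (simp add: of_nat_diff)
  moreover have "(of_nat sqrt_q * of_nat sqrt_q - 1) / 2 + of_nat b * (- (of_nat sqrt_q + 1) / 2) +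
      (of_nat sqrt_q - 1 - of_nat b) * ((of_nat sqrt_q - 1) / 2) =
      of_nat sqrt_q * (of_nat sqrt_q - 1) - of_nat b * (of_nat sqrt_q :: complex)"
    by (simp add: field_simps)
  ultimately show ?thesis
    unfolding sum_eigenvalue_minus_split[OF assms(1)] eigenvalue_zero b_def by simp
qed

lemma card_edges_plus_annihilator_B:
  assumes W: "additive_subgroup W" and card_W: "card W = sqrt_q"
  shows "card {z \<in> W \<times> W. fst z - snd z \<in> peisert_set} + card (annihilator W \<inter> B_set) * sqrt_q =
    sqrt_q * (sqrt_q - 1)"
proof -
  define E where "E = card {z \<in> W \<times> W. fst z - snd z \<in> peisert_set}"
  have "of_nat E * (of_nat sqrt_q * of_nat sqrt_q) =
      of_nat sqrt_q * of_nat sqrt_q * (\<Sum>y\<in>annihilator W. eigenvalue (- y))"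
    using card_edges_additive_subgroup[OF W] card_W card_field_sqrt_q unfolding E_def by simp
  hence "of_nat E = (\<Sum>y\<in>annihilator W. eigenvalue (- y))" using sqrt_q_ge_9 by simp
  also have "\<dots> = of_nat sqrt_q * (of_nat sqrt_q - 1) -
      of_nat (card (annihilator W \<inter> B_set)) * of_nat sqrt_q"
    using sum_eigenvalue_minus zero_in_annihilator card_annihilator_sqrt_q[OF assms] by simp
  finally have "of_nat (E + card (annihilator W \<inter> B_set) * sqrt_q) =
      (of_nat (sqrt_q * (sqrt_q - 1)) :: complex)"
    using sqrt_q_ge_9 by (simp add: of_nat_diff)
  thus ?thesis unfolding E_def of_nat_eq_iff .
qed

lemma card_off_diagonal: "finite W \<Longrightarrow> card {z \<in> W \<times> W. fst z \<noteq> snd z} = card W * (card W - 1)"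
proof -
  assume "finite W"
  have "{z \<in> W \<times> W. fst z \<noteq> snd z} = W \<times> W - (\<lambda>x. (x, x)) ` W" by auto
  moreover have "card ((\<lambda>x. (x, x)) ` W) = card W" by (rule card_image) (auto simp: inj_on_def)
  ultimately show ?thesis using \<open>finite W\<close>
    by (simp add: card_Diff_subset card_cartesian_product diff_mult_distrib2 image_subset_iff)
qed

lemma peisert_clique_iff_edges:
  assumes "finite W"
  shows "peisert_clique g W \<longleftrightarrow>
    card {z \<in> W \<times> W. fst z - snd z \<in> peisert_set} = card W * (card W - 1)"
proof -
  have sub: "{z \<in> W \<times> W. fst z - snd z \<in> peisert_set} \<subseteq> {z \<in> W \<times> W. fst z \<noteq> snd z}"
    unfolding peisert_set_def by auto
  have "peisert_clique g W \<longleftrightarrow>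
      {z \<in> W \<times> W. fst z - snd z \<in> peisert_set} = {z \<in> W \<times> W. fst z \<noteq> snd z}"
  proof
    assume "peisert_clique g W"
    hence "{z \<in> W \<times> W. fst z \<noteq> snd z} \<subseteq> {z \<in> W \<times> W. fst z - snd z \<in> peisert_set}"
      unfolding peisert_clique_def peisert_adj_iff by auto
    thus "{z \<in> W \<times> W. fst z - snd z \<in> peisert_set} = {z \<in> W \<times> W. fst z \<noteq> snd z}"
      using sub by blast
  next
    assume edges: "{z \<in> W \<times> W. fst z - snd z \<in> peisert_set} = {z \<in> W \<times> W. fst z \<noteq> snd z}"
    show "peisert_clique g W" unfolding peisert_clique_def peisert_adj_iff
    proof (intro ballI impI)
      fix x y assume "x \<in> W" "y \<in> W" "x \<noteq> y"
      hence "(x, y) \<in> {z \<in> W \<times> W. fst z \<noteq> snd z}" by simp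
      thus "x - y \<in> peisert_set" unfolding edges[symmetric] by simp
    qed
  qed
  also have "\<dots> \<longleftrightarrow> card {z \<in> W \<times> W. fst z - snd z \<in> peisert_set} = card {z \<in> W \<times> W. fst z \<noteq> snd z}"
  proof
    assume "card {z \<in> W \<times> W. fst z - snd z \<in> peisert_set} = card {z \<in> W \<times> W. fst z \<noteq> snd z}"
    thus "{z \<in> W \<times> W. fst z - snd z \<in> peisert_set} = {z \<in> W \<times> W. fst z \<noteq> snd z}"
      using sub assms by (intro card_subset_eq) simp_all
  qed simp
  finally show ?thesis using card_off_diagonal[OF assms] by simp
qed

theorem peisert_clique_iff_annihilator_disjoint_B:
  assumes "additive_subgroup W" "card W = sqrt_q"
  shows "peisert_clique g W \<longleftrightarrow> annihilator W \<inter> B_set = {}"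
proof -
  have "peisert_clique g W \<longleftrightarrow>
      card {z \<in> W \<times> W. fst z - snd z \<in> peisert_set} = sqrt_q * (sqrt_q - 1)"
    using peisert_clique_iff_edges[of W] assms(2) by simp
  also have "\<dots> \<longleftrightarrow> card (annihilator W \<inter> B_set) * sqrt_q = 0"
    using card_edges_plus_annihilator_B[OF assms] by (intro iffI) linarith+
  finally show ?thesis using sqrt_q_ge_9 by simp
qed

section \<open>The subfield of order \<open>p ^ r\<close> and the planes \<open>F + h F\<close>\<close>

definition frob_diff_image :: "'a set" where
  "frob_diff_image = {x ^ (p ^ r) - x | x. True}"

definition plane :: "'a \<Rightarrow> 'a set" where
  "plane h = (\<lambda>(a, b). a + b * h) ` (fixfield r \<times> fixfield r)"

lemma card_fixfield_r: "card (fixfield r) = p ^ r"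
  by (rule card_fixfield) simp

lemma frob_diff_image_subset: "frob_diff_image \<subseteq> annihilator (fixfield r)"
proof
  fix y assume "y \<in> frob_diff_image"
  then obtain z where z: "y = z ^ (p ^ r) - z" unfolding frob_diff_image_def by blast
  show "y \<in> annihilator (fixfield r)" unfolding annihilator_def
  proof (intro CollectI ballI)
    fix c assume "c \<in> fixfield r"
    hence "c * y = (c * z) ^ (p ^ r) + - (c * z)"
      unfolding z fixfield_def by (simp add: power_mult_distrib algebra_simps)
    hence "psi_K (c * y) = psi_K ((c * z) ^ (p ^ r)) * psi_K (- (c * z))" by (simp only: psi_K_add)
    also have "\<dots> = psi_K (c * z + - (c * z))" by (simp only: psi_K_frobenius_power psi_K_add)
    finally show "psi_K (c * y) = 1" by simp
  qed
qed

lemma card_frob_diff_image: "p ^ r * card frob_diff_image = p ^ (4 * r)"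
proof -
  define phi where "phi x = x ^ (p ^ r) - x" for x :: 'a
  have image_eq: "frob_diff_image = range phi" unfolding frob_diff_image_def phi_def by auto
  have phi_diff: "phi (a - b) = phi a - phi b" for a b
    unfolding phi_def by (simp add: frobenius_diff)
  have fibre: "card {x. phi x = z} = p ^ r" if z: "z \<in> range phi" for z
  proof -
    obtain x0 where x0: "z = phi x0" using z by blast
    have "{x. phi x = z} = (\<lambda>f. x0 + f) ` fixfield r"
    proof (intro equalityI subsetI)
      fix x assume "x \<in> {x. phi x = z}"
      hence "phi (x - x0) = 0" using x0 phi_diff by simp
      hence "x - x0 \<in> fixfield r" unfolding phi_def fixfield_def by simp
      thus "x \<in> (\<lambda>f. x0 + f) ` fixfield r" by (intro image_eqI[of _ _ "x - x0"]) auto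
    next
      fix x assume "x \<in> (\<lambda>f. x0 + f) ` fixfield r"
      then obtain f where "f \<in> fixfield r" "x = x0 + f" by blast
      thus "x \<in> {x. phi x = z}" using x0 phi_diff[of x f] unfolding phi_def fixfield_def by simp
    qed
    thus ?thesis using card_fixfield_r by (simp add: card_image)
  qed
  have "p ^ (4 * r) = (\<Sum>x\<in>(UNIV :: 'a set). 1::nat)" by (simp add: card_field)
  also have "\<dots> = (\<Sum>z\<in>range phi. \<Sum>x\<in>{x \<in> UNIV. phi x = z}. 1)"
    by (rule sum.group[symmetric]) auto
  also have "\<dots> = (\<Sum>z\<in>range phi. p ^ r)" by (intro sum.cong refl) (simp add: fibre)
  finally show ?thesis unfolding image_eq by (simp add: mult.commute[of "p ^ r"])
qed

lemma additive_subgroup_fixfield: "additive_subgroup (fixfield d)"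
  unfolding additive_subgroup_def using fixfield_add fixfield_minus by simp

lemma frob_diff_image_eq_annihilator: "frob_diff_image = annihilator (fixfield r)"
proof -
  have "p ^ r * card (annihilator (fixfield r)) = p ^ (4 * r)"
    using card_mult_card_annihilator[OF additive_subgroup_fixfield, of r] card_fixfield_r by simp
  hence "p ^ r * card (annihilator (fixfield r)) = p ^ r * card frob_diff_image"
    using card_frob_diff_image by simp
  hence "card (annihilator (fixfield r)) = card frob_diff_image" using p_ge_3 by simp
  thus ?thesis using frob_diff_image_subset by (intro card_subset_eq) simp_all
qed

lemma additive_subgroup_plane: "additive_subgroup (plane h)"
  unfolding additive_subgroup_def plane_def
proof (intro conjI ballI)
  show "0 \<in> (\<lambda>(a, b). a + b * h) ` (fixfield r \<times> fixfield r)"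
    by (rule image_eqI[of _ _ "(0, 0)"]) auto
next
  fix x y assume "x \<in> (\<lambda>(a, b). a + b * h) ` (fixfield r \<times> fixfield r)"
    "y \<in> (\<lambda>(a, b). a + b * h) ` (fixfield r \<times> fixfield r)"
  then obtain a b a' b' where ab: "a \<in> fixfield r" "b \<in> fixfield r" "x = a + b * h"
    "a' \<in> fixfield r" "b' \<in> fixfield r" "y = a' + b' * h" by auto
  have "x + y = (a + a') + (b + b') * h" using ab by (simp add: algebra_simps)
  thus "x + y \<in> (\<lambda>(a, b). a + b * h) ` (fixfield r \<times> fixfield r)"
    using ab by (intro image_eqI[of _ _ "(a + a', b + b')"]) (auto intro: fixfield_add)
next
  fix x assume "x \<in> (\<lambda>(a, b). a + b * h) ` (fixfield r \<times> fixfield r)"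
  then obtain a b where ab: "a \<in> fixfield r" "b \<in> fixfield r" "x = a + b * h" by auto
  thus "- x \<in> (\<lambda>(a, b). a + b * h) ` (fixfield r \<times> fixfield r)"
    by (intro image_eqI[of _ _ "(- a, - b)"]) (auto intro: fixfield_minus)
qed

lemma card_plane:
  assumes "h \<notin> fixfield r"
  shows "card (plane h) = sqrt_q"
proof -
  have "inj_on (\<lambda>(a, b). a + b * h) (fixfield r \<times> fixfield r)"
  proof (rule inj_onI, clarify)
    fix a b a' b' assume F: "a \<in> fixfield r" "b \<in> fixfield r" "a' \<in> fixfield r" "b' \<in> fixfield r"
      and eq: "a + b * h = a' + b' * h"
    have "b = b'"
    proof (rule ccontr)
      assume "b \<noteq> b'"
      hence "h = (a' - a) / (b - b')" using eq by (simp add: field_simps)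
      moreover have "(a' - a) / (b - b') \<in> fixfield r" using F by (intro fixfield_divide fixfield_diff)
      ultimately show False using assms by simp
    qed
    thus "a = a' \<and> b = b'" using eq by simp
  qed
  hence "card (plane h) = card (fixfield r \<times> fixfield r)" unfolding plane_def by (rule card_image)
  moreover have "p ^ r * p ^ r = sqrt_q" unfolding sqrt_q_def by (metis mult_2 power_add)
  ultimately show ?thesis unfolding card_cartesian_product card_fixfield_r by simp
qed

lemma annihilator_plane:
  assumes "h \<noteq> 0"
  shows "annihilator (plane h) = frob_diff_image \<inter> {inverse h * x | x. x \<in> frob_diff_image}"
proof (intro equalityI subsetI)
  fix y assume y: "y \<in> annihilator (plane h)"
  have mem: "a + b * h \<in> plane h" if "a \<in> fixfield r" "b \<in> fixfield r" for a b
    unfolding plane_def using that by (intro image_eqI[of _ _ "(a, b)"]) auto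
  have all: "psi_K (w * y) = 1" if "w \<in> plane h" for w
    using y that unfolding annihilator_def by simp
  have "psi_K (a * y) = 1" if "a \<in> fixfield r" for a
    using all[OF mem[OF that fixfield_zero]] by simp
  moreover have "psi_K (a * (h * y)) = 1" if "a \<in> fixfield r" for a
    using all[OF mem[OF fixfield_zero that]] by (simp add: mult.assoc)
  ultimately have "y \<in> frob_diff_image" "h * y \<in> frob_diff_image"
    unfolding frob_diff_image_eq_annihilator annihilator_def by auto
  moreover have "y = inverse h * (h * y)" using assms by simp
  ultimately show "y \<in> frob_diff_image \<inter> {inverse h * x | x. x \<in> frob_diff_image}" by blast
next
  fix y assume "y \<in> frob_diff_image \<inter> {inverse h * x | x. x \<in> frob_diff_image}"
  then obtain x where y: "y \<in> frob_diff_image" "x \<in> frob_diff_image" "h * y = x"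
    using assms by auto
  show "y \<in> annihilator (plane h)" unfolding annihilator_def
  proof (intro CollectI ballI)
    fix w assume "w \<in> plane h"
    then obtain a b where ab: "a \<in> fixfield r" "b \<in> fixfield r" "w = a + b * h"
      unfolding plane_def by auto
    have "w * y = a * y + b * x" using ab y(3) by (simp add: algebra_simps)
    moreover have "psi_K (a * y) = 1" "psi_K (b * x) = 1"
      using y ab unfolding frob_diff_image_eq_annihilator annihilator_def by auto
    ultimately show "psi_K (w * y) = 1" by (simp add: psi_K_add)
  qed
qed

section \<open>Cliques in the Peisert graph\<close>

text \<open>The nonzero elements of \<open>fixfield r\<close> are fourth powers: \<open>N\<close> is divisible by
  \<open>(p ^ r - 1) * 4\<close> since \<open>N = (p ^ r - 1) (p ^ r + 1) (sqrt_q + 1)\<close> with both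
  later factors even.\<close>

lemma dlog_mod_4_fixfield_r:
  assumes "x \<in> fixfield r" "x \<noteq> 0"
  shows "dlog x mod 4 = 0"
proof -
  define s where "s = p ^ r"
  have sqrt_q: "sqrt_q = s * s" unfolding s_def sqrt_q_def by (metis mult_2 power_add)
  have s_ge_3: "3 \<le> s" unfolding s_def using p_ge_3 r_pos
    by (metis le_trans self_le_power not_gr0 le_numeral_extra(2) le_trans[of 1 3 p] one_le_numeral)
  have N_s: "N = (s - 1) * ((s + 1) * (sqrt_q + 1))"
    unfolding N_factor sqrt_q using s_ge_3 by (simp add: algebra_simps)
  have "(s - 1) dvd N" unfolding N_s by (rule dvd_triv_left)
  moreover have "x ^ s = x" using assms(1) unfolding fixfield_def s_def by simp
  ultimately have "N div (s - 1) dvd dlog x"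
    using fixed_by_power_iff_dvd_dlog[of s x] assms(2) s_ge_3 by simp
  moreover have "s - 1 \<noteq> 0" using s_ge_3 by simp
  hence "N div (s - 1) = (s + 1) * (sqrt_q + 1)"
    unfolding N_s by (rule nonzero_mult_div_cancel_left)
  moreover have "odd s" unfolding s_def using odd_p by simp
  then obtain b where "s = 2 * b + 1" by (rule oddE)
  hence "(s + 1) * (sqrt_q + 1) = 4 * ((b + 1) * (2 * b * b + 2 * b + 1))"
    unfolding sqrt_q by (simp add: algebra_simps)
  hence "4 dvd (s + 1) * (sqrt_q + 1)" by simp
  ultimately show ?thesis by (metis dvd_trans mod_0_imp_dvd dvd_imp_mod_0)
qed

lemma fixfield_r_subset_peisert_set: "x \<in> fixfield r \<Longrightarrow> x \<noteq> 0 \<Longrightarrow> x \<in> peisert_set"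
  unfolding peisert_set_def using dlog_mod_4_fixfield_r by simp

lemma peisert_clique_fixfield_r: "peisert_clique g (fixfield r)"
  unfolding peisert_clique_def peisert_adj_iff
  using fixfield_r_subset_peisert_set fixfield_diff by simp

lemma mult_fourth_power_peisert_set:
  assumes "c \<noteq> 0" "dlog c mod 4 = 0" "s \<in> peisert_set"
  shows "c * s \<in> peisert_set"
  using assms dlog_mod_4_mult[of c s] unfolding peisert_set_def
  by (simp add: mod_add_left_eq[symmetric])

text \<open>A difference of two elements of \<open>F + v F\<close> lies in \<open>F\<close> or has the form
  \<open>e (v - c)\<close> with \<open>c, e \<in> F\<close>, and \<open>e\<close> is a fourth power.\<close>

lemma peisert_clique_plane:
  assumes v: "v \<notin> fixfield r" and clique: "peisert_clique g (insert v (fixfield r))"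
  shows "peisert_clique g (plane v)"
  unfolding peisert_clique_def peisert_adj_iff
proof (intro ballI impI)
  fix x y assume "x \<in> plane v" "y \<in> plane v" "x \<noteq> y"
  then obtain a b a' b' where ab: "a \<in> fixfield r" "b \<in> fixfield r" "x = a + b * v"
      "a' \<in> fixfield r" "b' \<in> fixfield r" "y = a' + b' * v"
    unfolding plane_def by auto
  show "x - y \<in> peisert_set"
  proof (cases "b = b'")
    case True
    thus ?thesis using ab \<open>x \<noteq> y\<close> fixfield_r_subset_peisert_set fixfield_diff by simp
  next
    case False
    define e where "e = b - b'"
    define c where "c = (a' - a) / e"
    have e: "e \<noteq> 0" "e \<in> fixfield r" unfolding e_def using False ab by (simp_all add: fixfield_diff)
    have c: "c \<in> fixfield r" unfolding c_def using ab e by (intro fixfield_divide fixfield_diff)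
    have "x - y = e * (v - c)" unfolding c_def e_def ab using e(1) unfolding e_def
      by (simp add: field_simps)
    moreover have "v - c \<in> peisert_set"
      using clique c v unfolding peisert_clique_def peisert_adj_iff by auto
    ultimately show ?thesis using mult_fourth_power_peisert_set dlog_mod_4_fixfield_r e by simp
  qed
qed

lemma generator_square_mult_peisert_set:
  assumes "s \<in> peisert_set"
  shows "g ^ 2 * s \<notin> peisert_set"
proof -
  have s: "s \<noteq> 0" "dlog s mod 4 = 0 \<or> dlog s mod 4 = 1"
    using assms unfolding peisert_set_def by auto
  have "dlog (g ^ 2) = 2" using eight_dvd_N N_pos by (auto dest: dvd_imp_le)
  hence "dlog (g ^ 2 * s) mod 4 = (2 + dlog s) mod 4" using dlog_mod_4_mult[of "g ^ 2" s] s(1) by simp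
  hence "dlog (g ^ 2 * s) mod 4 = 2 \<or> dlog (g ^ 2 * s) mod 4 = 3" using s(2) by presburger
  thus ?thesis unfolding peisert_set_def by auto
qed

text \<open>Multiplication by \<open>g\<^sup>2\<close> maps a clique onto an independent set of the same size.\<close>

lemma card_peisert_clique_le:
  assumes "peisert_clique g C"
  shows "card C \<le> sqrt_q"
proof -
  have diff: "x - y \<in> peisert_set" if "x \<in> C" "y \<in> C" "x \<noteq> y" for x y
    using assms that unfolding peisert_clique_def peisert_adj_iff by blast
  define D where "D = (\<lambda>x. g ^ 2 * x) ` C"
  have "card D = card C" unfolding D_def by (rule card_image) (simp add: inj_on_def)
  moreover have "d - d' \<notin> peisert_set" if "d \<in> D" "d' \<in> D" for d d'
  proof (cases "d = d'")
    case False
    with that obtain x x' where "x \<in> C" "x' \<in> C" "x \<noteq> x'" "d - d' = g ^ 2 * (x - x')"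
      unfolding D_def by (auto simp: right_diff_distrib)
    thus ?thesis using diff generator_square_mult_peisert_set by simp
  qed (simp add: peisert_set_def)
  ultimately have "card C * card C \<le> sqrt_q * sqrt_q"
    using card_mult_card_le_difference_sets[of C peisert_set D] diff card_field card_field_sqrt_q
    by simp
  show ?thesis
  proof (rule ccontr)
    assume "\<not> card C \<le> sqrt_q"
    hence "sqrt_q * sqrt_q < card C * card C" by (intro mult_strict_mono) auto
    thus False using \<open>card C * card C \<le> sqrt_q * sqrt_q\<close> by simp
  qed
qed

lemma peisert_clique_number_eq_sqrt_q:
  assumes "peisert_clique g W" "card W = sqrt_q"
  shows "peisert_clique_number g = sqrt_q"
  unfolding peisert_clique_number_def
proof (rule Max_eqI)
  show "finite {card S | S. peisert_clique g (S :: 'a set)}"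
    by (rule finite_subset[of _ "{..sqrt_q}"]) (auto simp: card_peisert_clique_le)
  show "sqrt_q \<in> {card S | S. peisert_clique g S}" using assms by force
qed (auto simp: card_peisert_clique_le)

lemma generator_powers_residue_class:
  assumes "c < 4"
  shows "{g ^ (4 * k + c) | k. 1 \<le> k \<and> k \<le> N div 4} = {x. x \<noteq> 0 \<and> dlog x mod 4 = c}"
proof -
  obtain m where m: "N = 4 * m" using four_dvd_N by blast
  have g_4m: "g ^ (4 * m) = 1" using m power_N_eq_one by simp
  show ?thesis
  proof (intro equalityI subsetI)
    fix y assume "y \<in> {g ^ (4 * k + c) | k. 1 \<le> k \<and> k \<le> N div 4}"
    then obtain k where "y = g ^ (4 * k + c)" by blast
    thus "y \<in> {x. x \<noteq> 0 \<and> dlog x mod 4 = c}" using four_dvd_N assms by (simp add: mod_mod_cancel)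
  next
    fix y assume "y \<in> {x. x \<noteq> 0 \<and> dlog x mod 4 = c}"
    hence y: "y \<noteq> 0" "dlog y mod 4 = c" by auto
    define j where "j = dlog y div 4"
    have j_less: "j < m" unfolding j_def using dlog_less[OF y(1)] m by simp
    have "dlog y = 4 * j + c" using y(2) unfolding j_def by presburger
    hence "y = g ^ (4 * j + c)" using generator_power_dlog[OF y(1)] by simp
    also have "\<dots> = g ^ (4 * (if j = 0 then m else j) + c)" using g_4m by (simp add: power_add)
    finally have "y = g ^ (4 * (if j = 0 then m else j) + c)" .
    thus "y \<in> {g ^ (4 * k + c) | k. 1 \<le> k \<and> k \<le> N div 4}"
      using m N_pos j_less by (intro CollectI exI[of _ "if j = 0 then m else j"]) auto
  qed
qed

lemma B_set_eq:
  "{g ^ (4 * k) | k. 1 \<le> k \<and> k \<le> (p ^ (4 * r) - 1) div 4}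
    \<union> {g ^ (4 * k + 3) | k. 1 \<le> k \<and> k \<le> (p ^ (4 * r) - 1) div 4} = B_set"
  using generator_powers_residue_class[of 0] generator_powers_residue_class[of 3]
  unfolding B_set_def N_eq[symmetric] by auto

end

theorem corollary5p8:
  fixes g :: "'a::{field,finite}" and p r :: nat
  assumes "r > 0" and "prime p" and "p mod 4 = 3"
    and "card (UNIV :: 'a set) = p ^ (4 * r)"
    and "primitive_root g"
  defines "B \<equiv> {g ^ (4 * k) | k. 1 \<le> k \<and> k \<le> (p ^ (4 * r) - 1) div 4}
             \<union> {g ^ (4 * k + 3) | k. 1 \<le> k \<and> k \<le> (p ^ (4 * r) - 1) div 4}"
    and "I \<equiv> {x ^ (p ^ r) - x | x::'a. True}"
    and "F \<equiv> {x::'a. x ^ (p ^ r) = x}"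
  shows "((\<forall>h. h \<notin> F \<longrightarrow> I \<inter> {inverse h * x | x. x \<in> I} \<inter> B \<noteq> {})
            \<longrightarrow> peisert_maximal_clique g F)
       \<and> (\<not> (\<forall>h. h \<notin> F \<longrightarrow> I \<inter> {inverse h * x | x. x \<in> I} \<inter> B \<noteq> {})
            \<longrightarrow> peisert_clique_number g = p ^ (2 * r))"
proof -
  interpret peisert_field g p r by unfold_locales (use assms in auto)
  have F: "F = fixfield r" and I: "I = frob_diff_image" and B: "B = B_set"
    unfolding F_def fixfield_def I_def frob_diff_image_def B_def B_set_eq by simp_all
  have plane_clique_iff: "peisert_clique g (plane h) \<longleftrightarrow> I \<inter> {inverse h * x | x. x \<in> I} \<inter> B = {}"
    if "h \<notin> F" for h
  proof -
    have "h \<noteq> 0" using that F by auto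
    thus ?thesis using peisert_clique_iff_annihilator_disjoint_B[OF additive_subgroup_plane card_plane]
      annihilator_plane that F I B by simp
  qed
  show ?thesis
  proof (intro conjI impI)
    assume "\<forall>h. h \<notin> F \<longrightarrow> I \<inter> {inverse h * x | x. x \<in> I} \<inter> B \<noteq> {}"
    thus "peisert_maximal_clique g F" unfolding peisert_maximal_clique_def
      using peisert_clique_fixfield_r peisert_clique_plane plane_clique_iff F by blast
  next
    assume "\<not> (\<forall>h. h \<notin> F \<longrightarrow> I \<inter> {inverse h * x | x. x \<in> I} \<inter> B \<noteq> {})"
    then obtain h where "h \<notin> F" "peisert_clique g (plane h)" using plane_clique_iff by blast
    thus "peisert_clique_number g = p ^ (2 * r)"
      using peisert_clique_number_eq_sqrt_q card_plane F unfolding sqrt_q_def by simp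
  qed
qed

end
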